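(* Let $k\ge 2$, $\epsilon>0$ and $0<u\le 2$. For the mechanism $\mathbf Q_{k,\epsilon,d^\ast}$ and its empirical estimator $\hat{\mathbf p}$, $$r_{k,n}^{\ell_u^u}(\mathbf Q_{k,\epsilon,d^\ast},\hat{\mathbf p})=\frac{k}{n^{u/2}}\,C_u\,M(k,\epsilon)^{u/2}+o(n^{-u/2})\quad\text{as } n\to\infty.$$
   Context: Let $\mathcal X=\{1,\dots,k\}$, $\Delta_k$ the probability simplex in $\mathbb R^k$. For $1\le d\le k-1$, let $\mathcal Y_{k,d}=\{y\in\{0,1\}^k:\sum_i y_i=d\}$ and define the mechanism $\mathbf Q_{k,\epsilon,d}(y\mid i)=\frac{e^{\epsilon}y_i+(1-y_i)}{\binom{k-1}{d-1}e^{\epsilon}+\binom{k-1}{d}}$ for $y\in\mathcal Y_{k,d}$, $i\in\mathcal X$. Given $\mathbf p\in\Delta_k$, the privatized samples $Y^{(1)},\dots,Y^{(n)}$ are i.i.d. with distribution $\mathbf m(y)=\sum_i p_i\mathbf Q_{k,\epsilon,d}(y\mid i)$. The empirical estimator is $\hat p_i(y^n)=\frac{(k-1)e^{\epsilon}+\frac{(k-1)(k-d)}{d}}{(k-d)(e^{\epsilon}-1)}\cdot\frac{t_i(y^n)}{n}-\frac{(d-1)e^{\epsilon}+k-d}{(k-d)(e^{\epsilon}-1)}$ with $t_i(y^n)=\sum_{j=1}^n y^{(j)}_i$. For $x\in\mathbb R^k$, $\ell_u^u(x)=\sum_i|x_i|^u$, and $r_{k,n}^{\ell_u^u}(\mathbf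 Q,\hat{\mathbf p})=\sup_{\mathbf p\in\Delta_k}\mathbb E_{Y^n\sim\mathbf m^n}\ell_u^u(\hat{\mathbf p}(Y^n)-\mathbf p)$. Let $C_u=\mathbb E|Z|^u=2^{u/2}\Gamma((u+1)/2)/\sqrt\pi$ for $Z\sim\mathcal N(0,1)$. Let $d^\ast\in\arg\min_{1\le d\le k-1}\frac{(de^{\epsilon}+k-d)^2}{d(k-d)}$ (ties broken arbitrarily) and $M(k,\epsilon)=\frac{(k-1)^2}{k^2(e^{\epsilon}-1)^2}\cdot\frac{(d^\ast e^{\epsilon}+k-d^\ast)^2}{d^\ast(k-d^\ast)}$. *)

theory Defs
  imports "HOL-Analysis.Analysis" "HOL-Library.Landau_Symbols"
begin

definition Yset :: "nat \<Rightarrow> nat \<Rightarrow> (nat \<Rightarrow> nat) set" where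
  "Yset k d = {y \<in> PiE {1..k} (\<lambda>_. {0, 1}). (\<Sum>i\<in>{1..k}. y i) = d}"

definition prob_simplex :: "nat \<Rightarrow> (nat \<Rightarrow> real) set" where
  "prob_simplex k = {p. (\<forall>i\<in>{1..k}. 0 \<le> p i) \<and> (\<Sum>i\<in>{1..k}. p i) = 1}"

definition Qmech :: "nat \<Rightarrow> real \<Rightarrow> nat \<Rightarrow> (nat \<Rightarrow> nat) \<Rightarrow> nat \<Rightarrow> real" where
  "Qmech k eps d y i =
     (exp eps * real (y i) + (1 - real (y i))) /
     (real ((k - 1) choose (d - 1)) * exp eps + real ((k - 1) choose d))"

definition mdist :: "nat \<Rightarrow> real \<Rightarrow> nat \<Rightarrow> (nat \<Rightarrow> real) \<Rightarrow> (nat \<Rightarrow> nat) \<Rightarrow> real" where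
  "mdist k eps d p y = (\<Sum>i\<in>{1..k}. p i * Qmech k eps d y i)"

definition tcount :: "nat \<Rightarrow> (nat \<Rightarrow> nat \<Rightarrow> nat) \<Rightarrow> nat \<Rightarrow> real" where
  "tcount n ys i = (\<Sum>j<n. real (ys j i))"

definition phat :: "nat \<Rightarrow> real \<Rightarrow> nat \<Rightarrow> nat \<Rightarrow> (nat \<Rightarrow> nat \<Rightarrow> nat) \<Rightarrow> nat \<Rightarrow> real" where
  "phat k eps d n ys i =
     ((real k - 1) * exp eps + (real k - 1) * (real k - real d) / real d)
       / ((real k - real d) * (exp eps - 1)) * (tcount n ys i / real n)
     - ((real d - 1) * exp eps + real k - real d) / ((real k - real d) * (exp eps - 1))"

definition lossu :: "nat \<Rightarrow> real \<Rightarrow> (nat \<Rightarrow> real) \<Rightarrow> real" where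
  "lossu k u x = (\<Sum>i\<in>{1..k}. \<bar>x i\<bar> powr u)"

text \<open>Expected loss under p: Y^n i.i.d. with law m, expectation as a finite sum.\<close>
definition exp_loss :: "nat \<Rightarrow> real \<Rightarrow> nat \<Rightarrow> real \<Rightarrow> nat \<Rightarrow> (nat \<Rightarrow> real) \<Rightarrow> real" where
  "exp_loss k eps d u n p =
     (\<Sum>ys\<in>PiE {..<n} (\<lambda>_. Yset k d).
        (\<Prod>j<n. mdist k eps d p (ys j)) * lossu k u (\<lambda>i. phat k eps d n ys i - p i))"

definition risk :: "nat \<Rightarrow> real \<Rightarrow> nat \<Rightarrow> real \<Rightarrow> nat \<Rightarrow> real" where
  "risk k eps d u n = (SUP p\<in>prob_simplex k. exp_loss k eps d u n p)"

definition Cu :: "real \<Rightarrow> real" where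
  "Cu u = 2 powr (u / 2) * Gamma ((u + 1) / 2) / sqrt pi"

definition dobj :: "nat \<Rightarrow> real \<Rightarrow> nat \<Rightarrow> real" where
  "dobj k eps d = (real d * exp eps + real k - real d)^2 / (real d * (real k - real d))"

definition Mconst :: "nat \<Rightarrow> real \<Rightarrow> nat \<Rightarrow> real" where
  "Mconst k eps ds = (real k - 1)^2 / ((real k)^2 * (exp eps - 1)^2) * dobj k eps ds"

end

theory Submission
  imports Defs "HOL-Probability.Probability"
begin

text \<open>
  The coordinate counts \<open>t\<^sub>i\<close> of the privatised sample are binomial with success probability
  \<open>q\<^sub>i = \<beta> + (\<alpha> - \<beta>) p\<^sub>i\<close>, where \<open>\<alpha>\<close> (resp. \<open>\<beta>\<close>) is the probability that coordinate \<open>i\<close> of the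
  output is set when the input is \<open>i\<close> (resp. another letter).  The estimator is affine in
  \<open>t\<^sub>i / n\<close> with slope \<open>A = 1 / (\<alpha> - \<beta>)\<close>, so the scaled expected loss is
  \<open>n\<^bsup>u/2\<^esup> E l\<^sub>u\<^sup>u = A\<^sup>u \<Sum>\<^sub>i E |(t\<^sub>i - n q\<^sub>i) / sqrt n|\<^sup>u\<close>.
  By the central limit theorem (via Levy's continuity theorem) and the uniform integrability
  supplied by the bounded second moments, \<open>E |(t - n q) / sqrt n|\<^sup>u\<close> tends to
  \<open>C\<^sub>u (q (1 - q))\<^bsup>u/2\<^esup>\<close>, uniformly for \<open>q\<close> in a compact interval.  For \<open>u \<le> 2\<close> this limit is
  concave in \<open>q\<close> while \<open>\<Sum>\<^sub>i q\<^sub>i = d\<close> is fixed, so asymptotically the supremum over the simplex is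
  attained at the uniform distribution, where \<open>q\<^sub>i = d / k\<close> and \<open>A\<^sup>2 (d / k) (1 - d / k) = M(k, \<epsilon>)\<close>.
\<close>

section \<open>Absolute moments of centred normal distributions\<close>

lemma powr_half_square_times:
  fixes x u :: real assumes "x > 0"
  shows "(x\<^sup>2 / 2) powr ((u - 1) / 2) * x = 2 powr ((1 - u) / 2) * x powr u"
proof -
  have "(x\<^sup>2 / 2) powr ((u - 1) / 2) = (x powr 2) powr ((u - 1) / 2) / 2 powr ((u - 1) / 2)"
    using assms by (simp add: powr_divide flip: powr_numeral)
  also have "(x powr 2) powr ((u - 1) / 2) = x powr (u - 1)"
    by (simp add: powr_powr diff_divide_distrib)
  also have "x powr (u - 1) / 2 powr ((u - 1) / 2) = x powr (u - 1) * 2 powr ((1 - u) / 2)"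
    using powr_minus_divide[of 2 "(u - 1) / 2"] by (simp add: minus_divide_left)
  finally show ?thesis using assms by (simp add: powr_diff)
qed

lemma nn_integral_Icc_tendsto_nn_integral_atLeast:
  fixes g :: "real \<Rightarrow> real" and c :: "nat \<Rightarrow> real"
  assumes "\<And>x. x \<ge> 0 \<Longrightarrow> g x \<ge> 0" and [measurable]: "g \<in> borel_measurable borel"
    and "incseq c" and "filterlim c at_top sequentially"
  shows "(\<lambda>n. \<integral>\<^sup>+x. ennreal (g x * indicator {0..c n} x) \<partial>lborel)
          \<longlonglongrightarrow> (\<integral>\<^sup>+x. ennreal (g x * indicator {0..} x) \<partial>lborel)"
proof (rule nn_integral_LIMSEQ)
  show "incseq (\<lambda>n x. ennreal (g x * indicator {0..c n} x))"
  proof (intro monoI le_funI)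
    fix m n :: nat and x :: real assume "m \<le> n"
    then have "c m \<le> c n" using assms(3) by (simp add: incseq_def)
    then show "ennreal (g x * indicator {0..c m} x) \<le> ennreal (g x * indicator {0..c n} x)"
      using assms(1)[of x] by (auto simp: indicator_def intro!: ennreal_leI)
  qed
  fix x :: real
  have "eventually (\<lambda>n. c n \<ge> x) sequentially"
    using assms(4) by (simp add: filterlim_at_top)
  then show "(\<lambda>n. ennreal (g x * indicator {0..c n} x)) \<longlonglongrightarrow> ennreal (g x * indicator {0..} x)"
    by (rule tendsto_eventually[OF eventually_mono]) (auto simp: indicator_def)
qed simp_all

lemma nn_integral_powr_gaussian_Icc:
  fixes u b :: real assumes "b \<ge> 0"
  shows "(\<integral>\<^sup>+x. ennreal (x powr ((u - 1) / 2) * exp (- x) * indicator {0..b\<^sup>2 / 2} x) \<partial>lborel)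
       = ennreal (2 powr ((1 - u) / 2)) * (\<integral>\<^sup>+x. ennreal (x powr u * exp (- x\<^sup>2 / 2) * indicator {0..b} x) \<partial>lborel)"
proof -
  have "(\<integral>\<^sup>+x. ennreal (x powr ((u - 1) / 2) * exp (- x) * indicator {(\<lambda>x. x\<^sup>2 / 2) 0..(\<lambda>x. x\<^sup>2 / 2) b} x) \<partial>lborel)
      = (\<integral>\<^sup>+x. ennreal ((x\<^sup>2 / 2) powr ((u - 1) / 2) * exp (- (x\<^sup>2 / 2)) * x * indicator {0..b} x) \<partial>lborel)"
    by (rule nn_integral_substitution)
       (use assms in \<open>auto intro!: derivative_eq_intros continuous_intros simp: set_borel_measurable_def\<close>)
  also have "\<dots> = (\<integral>\<^sup>+x. ennreal (2 powr ((1 - u) / 2)) * ennreal (x powr u * exp (- x\<^sup>2 / 2) * indicator {0..b} x) \<partial>lborel)"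
  proof (intro nn_integral_cong)
    fix x :: real
    show "ennreal ((x\<^sup>2 / 2) powr ((u - 1) / 2) * exp (- (x\<^sup>2 / 2)) * x * indicator {0..b} x)
        = ennreal (2 powr ((1 - u) / 2)) * ennreal (x powr u * exp (- x\<^sup>2 / 2) * indicator {0..b} x)"
      using powr_half_square_times[of x u]
      by (cases "x > 0") (auto simp: indicator_def mult_ac simp flip: ennreal_mult)
  qed
  finally show ?thesis by (simp add: nn_integral_cmult)
qed

lemma nn_integral_powr_gaussian_half_line:
  fixes u :: real assumes "u > -1"
  shows "(\<integral>\<^sup>+x. ennreal (x powr u * exp (- x\<^sup>2 / 2) * indicator {0..} x) \<partial>lborel)
       = ennreal (2 powr ((u - 1) / 2) * Gamma ((u + 1) / 2))"
proof -
  define c :: real where "c = 2 powr ((1 - u) / 2)"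
  define I where "I = (\<integral>\<^sup>+x. ennreal (x powr u * exp (- x\<^sup>2 / 2) * indicator {0..} x) \<partial>lborel)"
  have c: "c > 0" by (simp add: c_def)
  have substitution: "(\<integral>\<^sup>+x. ennreal (x powr ((u - 1) / 2) * exp (- x) * indicator {0..real n} x) \<partial>lborel)
      = ennreal c * (\<integral>\<^sup>+x. ennreal (x powr u * exp (- x\<^sup>2 / 2) * indicator {0..sqrt (2 * real n)} x) \<partial>lborel)"
    for n
    using nn_integral_powr_gaussian_Icc[of "sqrt (2 * real n)" u] by (simp add: c_def)
  have "(\<lambda>n. \<integral>\<^sup>+x. ennreal (x powr ((u - 1) / 2) * exp (- x) * indicator {0..real n} x) \<partial>lborel)
      \<longlonglongrightarrow> (\<integral>\<^sup>+x. ennreal (x powr ((u - 1) / 2) * exp (- x) * indicator {0..} x) \<partial>lborel)"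
    by (rule nn_integral_Icc_tendsto_nn_integral_atLeast) (auto simp: incseq_def filterlim_real_sequentially)
  also have "(\<integral>\<^sup>+x. ennreal (x powr ((u - 1) / 2) * exp (- x) * indicator {0..} x) \<partial>lborel)
      = ennreal (Gamma ((u + 1) / 2))"
    using assms by (subst Gamma_conv_nn_integral_real)
      (auto intro!: nn_integral_cong simp: exp_minus field_simps indicator_def)
  finally have "(\<lambda>n. ennreal c * \<integral>\<^sup>+x. ennreal (x powr u * exp (- x\<^sup>2 / 2) * indicator {0..sqrt (2 * real n)} x) \<partial>lborel)
      \<longlonglongrightarrow> ennreal (Gamma ((u + 1) / 2))"
    unfolding substitution .
  moreover have "filterlim (\<lambda>n. sqrt (2 * real n)) at_top sequentially"
    by (intro filterlim_compose[OF sqrt_at_top] filterlim_tendsto_pos_mult_at_top[OF tendsto_const]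
        filterlim_real_sequentially) simp
  then have "(\<lambda>n. ennreal c * \<integral>\<^sup>+x. ennreal (x powr u * exp (- x\<^sup>2 / 2) * indicator {0..sqrt (2 * real n)} x) \<partial>lborel)
      \<longlonglongrightarrow> ennreal c * I"
    unfolding I_def
    by (intro ennreal_tendsto_cmult nn_integral_Icc_tendsto_nn_integral_atLeast) (auto simp: incseq_def)
  ultimately have cI: "ennreal c * I = ennreal (Gamma ((u + 1) / 2))"
    by (rule LIMSEQ_unique[rotated])
  have "I = ennreal (1 / c) * (ennreal c * I)"
    using c by (simp add: mult.assoc[symmetric] flip: ennreal_mult'')
  also have "\<dots> = ennreal (Gamma ((u + 1) / 2) / c)"
    unfolding cI using c assms Gamma_real_pos[of "(u + 1) / 2"] by (simp flip: ennreal_mult)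
  also have "Gamma ((u + 1) / 2) / c = 2 powr ((u - 1) / 2) * Gamma ((u + 1) / 2)"
    using powr_minus_divide[of 2 "(1 - u) / 2"] by (simp add: c_def minus_divide_left field_simps)
  finally show ?thesis unfolding I_def .
qed

lemma Cu_eq: "2 / sqrt (2 * pi) * (2 powr ((u - 1) / 2) * Gamma ((u + 1) / 2)) = Cu u"
proof -
  have "2 * 2 powr ((u - 1) / 2) = 2 powr (1 + (u - 1) / 2)"
    by (simp add: powr_add)
  also have "\<dots> = 2 powr (u / 2) * sqrt 2"
    by (simp add: powr_half_sqrt[symmetric] powr_add[symmetric] field_simps)
  finally have "2 * 2 powr ((u - 1) / 2) = 2 powr (u / 2) * sqrt 2" .
  then show ?thesis
    unfolding Cu_def by (simp add: real_sqrt_mult field_simps)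
qed

lemma Cu_nonneg: "u > -1 \<Longrightarrow> Cu u \<ge> 0"
  unfolding Cu_def using Gamma_real_pos[of "(u + 1) / 2"] by simp

lemma Cu_2: "Cu 2 = 1"
proof -
  have "Gamma (3 / 2 :: real) = Gamma (1 / 2 + 1)" by simp
  also have "\<dots> = sqrt pi / 2"
    by (subst Gamma_plus1) (auto simp: Gamma_one_half_real dest: nonpos_Ints_nonpos)
  finally show ?thesis unfolding Cu_def by simp
qed

lemma std_normal_abs_moment:
  fixes u :: real assumes "u > -1"
  shows "has_bochner_integral std_normal_distribution (\<lambda>x. \<bar>x\<bar> powr u) (Cu u)"
proof -
  define h where "h x = x powr u * exp (- x\<^sup>2 / 2) * indicator {0..} x" for x :: real
  have [measurable]: "h \<in> borel_measurable borel" unfolding h_def by measurable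
  have h_nonneg: "h x \<ge> 0" for x by (simp add: h_def)
  have density_split: "std_normal_density x * \<bar>x\<bar> powr u = (h x + h (- x)) / sqrt (2 * pi)" for x
    by (cases x "0 :: real" rule: linorder_cases)
       (auto simp: h_def std_normal_density_def indicator_def)
  have "(\<integral>\<^sup>+x. ennreal (std_normal_density x * \<bar>x\<bar> powr u) \<partial>lborel)
      = (\<integral>\<^sup>+x. ennreal (1 / sqrt (2 * pi)) * (ennreal (h x) + ennreal (h (- x))) \<partial>lborel)"
    unfolding density_split using h_nonneg
    by (intro nn_integral_cong) (simp add: add_nonneg_nonneg flip: ennreal_plus ennreal_mult)
  also have "\<dots> = ennreal (1 / sqrt (2 * pi)) * ((\<integral>\<^sup>+x. ennreal (h x) \<partial>lborel) + (\<integral>\<^sup>+x. ennreal (h (- x)) \<partial>lborel))"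
    by (simp add: nn_integral_cmult nn_integral_add)
  also have "(\<integral>\<^sup>+x. ennreal (h (- x)) \<partial>lborel) = (\<integral>\<^sup>+x. ennreal (h x) \<partial>lborel)"
    using nn_integral_real_affine[of "\<lambda>x. ennreal (h x)" "-1" 0] by simp
  also have "(\<integral>\<^sup>+x. ennreal (h x) \<partial>lborel) = ennreal (2 powr ((u - 1) / 2) * Gamma ((u + 1) / 2))"
    unfolding h_def by (rule nn_integral_powr_gaussian_half_line[OF assms])
  finally have "(\<integral>\<^sup>+x. ennreal (std_normal_density x * \<bar>x\<bar> powr u) \<partial>lborel) = ennreal (Cu u)"
    using assms Gamma_real_pos[of "(u + 1) / 2"]
    by (simp add: Cu_eq[symmetric] field_simps flip: ennreal_mult ennreal_plus)
  then have "has_bochner_integral lborel (\<lambda>x. std_normal_density x * \<bar>x\<bar> powr u) (Cu u)"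
    using Cu_nonneg[OF assms] by (intro has_bochner_integral_nn_integral) auto
  then show ?thesis
    by (intro has_bochner_integral_density) auto
qed

text \<open>For \<open>\<sigma> = 0\<close> this is the point mass at \<open>0\<close>, which the library's \<open>normal_density\<close> does not cover.\<close>

definition centered_normal :: "real \<Rightarrow> real measure" where
  "centered_normal \<sigma> = distr std_normal_distribution borel (\<lambda>x. \<sigma> * x)"

lemma real_distribution_centered_normal: "real_distribution (centered_normal \<sigma>)"
proof -
  interpret real_distribution std_normal_distribution by (rule real_dist_normal_dist)
  show ?thesis unfolding centered_normal_def by (rule real_distribution_distr) simp
qed

lemma char_centered_normal: "char (centered_normal \<sigma>) t = exp (- (\<sigma>\<^sup>2 * t\<^sup>2 / 2))"
proof -
  have "char (centered_normal \<sigma>) t = char std_normal_distribution (t * \<sigma>)"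
    unfolding char_def centered_normal_def by (subst integral_distr) (auto simp: mult.assoc)
  then show ?thesis
    by (simp add: char_std_normal_distribution power_mult_distrib mult.commute)
qed

lemma centered_normal_abs_moment:
  assumes "u > -1" and "\<sigma> \<ge> 0"
  shows "has_bochner_integral (centered_normal \<sigma>) (\<lambda>x. \<bar>x\<bar> powr u) (\<sigma> powr u * Cu u)"
proof -
  have "(\<lambda>x. \<bar>\<sigma> * x\<bar> powr u) = (\<lambda>x. \<sigma> powr u * \<bar>x\<bar> powr u)"
    using assms(2) by (simp add: abs_mult powr_mult)
  then have "has_bochner_integral std_normal_distribution (\<lambda>x. \<bar>\<sigma> * x\<bar> powr u) (\<sigma> powr u * Cu u)"
    using has_bochner_integral_mult_right[OF std_normal_abs_moment[OF assms(1)]] by simp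
  then show ?thesis
    unfolding centered_normal_def by (simp add: has_bochner_integral_distr)
qed

lemma centered_normal_variance:
  "has_bochner_integral (centered_normal \<sigma>) (\<lambda>x. x\<^sup>2) (\<sigma>\<^sup>2)"
proof -
  have "has_bochner_integral std_normal_distribution (\<lambda>x. x\<^sup>2) 1"
    using std_normal_distribution_even_moments[of 1]
    by (simp add: has_bochner_integral_iff fact_numeral)
  from has_bochner_integral_mult_right[OF this, of "\<sigma>\<^sup>2"]
  have "has_bochner_integral std_normal_distribution (\<lambda>x. (\<sigma> * x)\<^sup>2) (\<sigma>\<^sup>2)"
    by (simp add: power_mult_distrib)
  then show ?thesis
    unfolding centered_normal_def by (simp add: has_bochner_integral_distr)
qed

section \<open>Binomial expectations\<close>

definition binomial_expectation :: "nat \<Rightarrow> real \<Rightarrow> (nat \<Rightarrow> real) \<Rightarrow> real" where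
  "binomial_expectation n q f = (\<Sum>t\<le>n. real (n choose t) * q ^ t * (1 - q) ^ (n - t) * f t)"

lemma binomial_expectation_eq_expectation:
  "q \<in> {0..1} \<Longrightarrow> binomial_expectation n q f = measure_pmf.expectation (binomial_pmf n q) f"
  by (simp add: expectation_binomial_pmf' binomial_expectation_def)

lemma binomial_expectation_0 [simp]: "binomial_expectation 0 q f = f 0"
  by (simp add: binomial_expectation_def)

lemma binomial_expectation_shift:
  "binomial_expectation n q f = (1 - q) ^ n * f 0
     + (\<Sum>t<n. real (n choose Suc t) * q ^ Suc t * (1 - q) ^ (n - Suc t) * f (Suc t))"
  unfolding binomial_expectation_def
  by (cases n) (simp_all add: sum.atMost_Suc_shift lessThan_Suc_atMost del: sum.atMost_Suc)

lemma binomial_expectation_Suc: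
  "binomial_expectation (Suc n) q f
     = q * binomial_expectation n q (\<lambda>t. f (Suc t)) + (1 - q) * binomial_expectation n q f"
proof -
  have "(\<Sum>t\<le>n. real (Suc n choose Suc t) * q ^ Suc t * (1 - q) ^ (n - t) * f (Suc t))
     = q * binomial_expectation n q (\<lambda>t. f (Suc t))
       + (\<Sum>t\<le>n. real (n choose Suc t) * q ^ Suc t * (1 - q) ^ (n - t) * f (Suc t))"
    by (simp add: binomial_expectation_def sum_distrib_left sum.distrib[symmetric] algebra_simps)
  also have "(\<Sum>t\<le>n. real (n choose Suc t) * q ^ Suc t * (1 - q) ^ (n - t) * f (Suc t))
      = (\<Sum>t<n. real (n choose Suc t) * q ^ Suc t * (1 - q) ^ (n - t) * f (Suc t))"
    by (simp add: lessThan_Suc_atMost[symmetric])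
  also have "\<dots> = (1 - q) * (\<Sum>t<n. real (n choose Suc t) * q ^ Suc t * (1 - q) ^ (n - Suc t) * f (Suc t))"
    unfolding sum_distrib_left
  proof (intro sum.cong refl)
    fix t assume "t \<in> {..<n}"
    then have "n - t = Suc (n - Suc t)" by simp
    then show "real (n choose Suc t) * q ^ Suc t * (1 - q) ^ (n - t) * f (Suc t)
        = (1 - q) * (real (n choose Suc t) * q ^ Suc t * (1 - q) ^ (n - Suc t) * f (Suc t))"
      by simp
  qed
  finally have pascal: "(\<Sum>t\<le>n. real (Suc n choose Suc t) * q ^ Suc t * (1 - q) ^ (n - t) * f (Suc t))
     = q * binomial_expectation n q (\<lambda>t. f (Suc t))
       + (1 - q) * (\<Sum>t<n. real (n choose Suc t) * q ^ Suc t * (1 - q) ^ (n - Suc t) * f (Suc t))" .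
  have "binomial_expectation (Suc n) q f = (1 - q) ^ Suc n * f 0
      + (\<Sum>t\<le>n. real (Suc n choose Suc t) * q ^ Suc t * (1 - q) ^ (n - t) * f (Suc t))"
    unfolding binomial_expectation_def by (subst sum.atMost_Suc_shift) simp
  also have "\<dots> = q * binomial_expectation n q (\<lambda>t. f (Suc t)) + (1 - q) * ((1 - q) ^ n * f 0
      + (\<Sum>t<n. real (n choose Suc t) * q ^ Suc t * (1 - q) ^ (n - Suc t) * f (Suc t)))"
    unfolding pascal by (simp add: algebra_simps)
  finally show ?thesis
    by (simp only: binomial_expectation_shift[symmetric])
qed

lemma binomial_expectation_add:
  "binomial_expectation n q (\<lambda>t. f t + g t) = binomial_expectation n q f + binomial_expectation n q g"
  by (simp add: binomial_expectation_def algebra_simps sum.distrib)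

lemma binomial_expectation_cmult:
  "binomial_expectation n q (\<lambda>t. c * f t) = c * binomial_expectation n q f"
  by (simp add: binomial_expectation_def sum_distrib_left algebra_simps)

lemma binomial_expectation_const: "binomial_expectation n q (\<lambda>t. c) = c"
  by (induction n) (simp_all add: binomial_expectation_Suc algebra_simps)

lemma binomial_expectation_cong:
  "(\<And>t. t \<le> n \<Longrightarrow> f t = g t) \<Longrightarrow> binomial_expectation n q f = binomial_expectation n q g"
  unfolding binomial_expectation_def by (intro sum.cong) auto

lemma binomial_expectation_mean: "binomial_expectation n q real = real n * q"
proof (induction n)
  case (Suc n)
  have "binomial_expectation n q (\<lambda>t. 1 + real t) = real n * q + 1"
    using Suc.IH binomial_expectation_add[of n q "\<lambda>_. 1" real]
    by (simp add: binomial_expectation_const)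
  then show ?case
    using Suc.IH by (simp add: binomial_expectation_Suc algebra_simps)
qed simp

lemma binomial_expectation_variance:
  "binomial_expectation n q (\<lambda>t. (real t - real n * q)\<^sup>2) = real n * q * (1 - q)"
proof -
  have second_moment: "binomial_expectation m q (\<lambda>t. (real t)\<^sup>2) = real m * q * (1 - q) + (real m * q)\<^sup>2"
    for m
  proof (induction m)
    case (Suc m)
    have "binomial_expectation m q (\<lambda>t. (real (Suc t))\<^sup>2)
        = binomial_expectation m q (\<lambda>t. (real t)\<^sup>2 + 2 * real t + 1)"
      by (rule binomial_expectation_cong) (simp add: power2_eq_square algebra_simps)
    also have "\<dots> = binomial_expectation m q (\<lambda>t. (real t)\<^sup>2) + 2 * binomial_expectation m q real + 1"
      by (simp only: binomial_expectation_add binomial_expectation_cmult binomial_expectation_const)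
    finally show ?case
      using Suc.IH by (simp add: binomial_expectation_Suc binomial_expectation_mean algebra_simps
          power2_eq_square)
  qed simp
  have "binomial_expectation n q (\<lambda>t. (real t - real n * q)\<^sup>2)
      = binomial_expectation n q (\<lambda>t. (real t)\<^sup>2 + (- 2 * (real n * q)) * real t + (real n * q)\<^sup>2)"
    by (rule binomial_expectation_cong) (simp add: power2_diff algebra_simps)
  also have "\<dots> = binomial_expectation n q (\<lambda>t. (real t)\<^sup>2) + (- 2 * (real n * q)) * binomial_expectation n q real
        + (real n * q)\<^sup>2"
    by (simp only: binomial_expectation_add binomial_expectation_cmult binomial_expectation_const)
  finally show ?thesis
    unfolding second_moment binomial_expectation_mean by (simp add: power2_eq_square algebra_simps)
qed

lemma sum_PiE_prod_count_eq_binomial_expectation: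
  fixes w :: "'a \<Rightarrow> real" and g :: "'a \<Rightarrow> nat"
  assumes "finite Y" and "\<And>y. y \<in> Y \<Longrightarrow> g y \<in> {0, 1}" and "(\<Sum>y\<in>Y. w y) = 1"
  shows "(\<Sum>ys\<in>PiE {..<n} (\<lambda>_. Y). (\<Prod>j<n. w (ys j)) * h (\<Sum>j<n. real (g (ys j))))
       = binomial_expectation n (\<Sum>y\<in>Y. w y * real (g y)) (\<lambda>t. h (real t))"
proof (induction n arbitrary: h)
  case (Suc n)
  define q where "q = (\<Sum>y\<in>Y. w y * real (g y))"
  define P where "P = PiE {..<n} (\<lambda>_. Y)"
  define F where "F ys = (\<Prod>j<Suc n. w (ys j)) * h (\<Sum>j<Suc n. real (g (ys j)))" for ys
  have split: "PiE {..<Suc n} (\<lambda>_. Y) = (\<lambda>(y, ys). ys(n := y)) ` (Y \<times> P)"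
    using PiE_insert_eq[of n "{..<n}" "\<lambda>_. Y"] by (simp add: lessThan_Suc P_def)
  have "inj_on (\<lambda>(y, ys). ys(n := y)) (Y \<times> P)"
    unfolding P_def by (rule inj_combinator) simp
  then have "(\<Sum>ys\<in>PiE {..<Suc n} (\<lambda>_. Y). F ys) = (\<Sum>(y, ys)\<in>Y \<times> P. F (ys(n := y)))"
    unfolding split by (subst sum.reindex) (simp_all add: case_prod_unfold)
  also have "\<dots> = (\<Sum>y\<in>Y. \<Sum>ys\<in>P. F (ys(n := y)))"
    by (rule sum.cartesian_product[symmetric])
  also have "\<dots> = (\<Sum>y\<in>Y. w y * binomial_expectation n q (\<lambda>t. h (real (g y) + real t)))"
  proof (intro sum.cong refl)
    fix y
    have "F (ys(n := y)) = w y * ((\<Prod>j<n. w (ys j)) * h (real (g y) + (\<Sum>j<n. real (g (ys j)))))" for ys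
      unfolding F_def by (simp add: lessThan_Suc_atMost[symmetric] algebra_simps)
    then show "(\<Sum>ys\<in>P. F (ys(n := y))) = w y * binomial_expectation n q (\<lambda>t. h (real (g y) + real t))"
      using Suc.IH[of "\<lambda>s. h (real (g y) + s)"] by (simp add: P_def q_def flip: sum_distrib_left)
  qed
  also have "\<dots> = (\<Sum>y\<in>Y. w y * real (g y) * binomial_expectation n q (\<lambda>t. h (1 + real t))
      + (w y - w y * real (g y)) * binomial_expectation n q (\<lambda>t. h (real t)))"
    using assms(2) by (intro sum.cong refl) (fastforce simp: algebra_simps)
  also have "\<dots> = binomial_expectation (Suc n) q (\<lambda>t. h (real t))"
    using assms(3)
    by (simp add: binomial_expectation_Suc q_def sum.distrib sum_subtractf add.commute
        flip: sum_distrib_right)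
  finally show ?case unfolding F_def q_def .
qed simp

section \<open>A central limit theorem for binomial triangular arrays\<close>

text \<open>For \<open>n = 0\<close> the division by \<open>sqrt 0 = 0\<close> makes this the point mass at \<open>0\<close>.\<close>

definition normalized_binomial :: "nat \<Rightarrow> real \<Rightarrow> real measure" where
  "normalized_binomial n q =
     distr (measure_pmf (binomial_pmf n q)) borel (\<lambda>t. (real t - real n * q) / sqrt (real n))"

lemma real_distribution_normalized_binomial: "real_distribution (normalized_binomial n q)"
  unfolding normalized_binomial_def
  by (rule prob_space.real_distribution_distr[OF prob_space_measure_pmf]) simp

lemma integral_normalized_binomial:
  assumes "q \<in> {0..1}" and "g \<in> borel_measurable borel"
  shows "integral\<^sup>L (normalized_binomial n q) g
       = binomial_expectation n q (\<lambda>t. g ((real t - real n * q) / sqrt (real n)))"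
  unfolding normalized_binomial_def using assms
  by (simp add: integral_distr binomial_expectation_eq_expectation)

lemma integrable_normalized_binomial:
  fixes g :: "real \<Rightarrow> 'b::{banach, second_countable_topology}"
  assumes "q \<in> {0..1}" and "g \<in> borel_measurable borel"
  shows "integrable (normalized_binomial n q) g"
  unfolding normalized_binomial_def using assms
  by (subst integrable_distr_eq) (auto intro!: integrable_measure_pmf_finite)

lemma normalized_binomial_variance:
  assumes "q \<in> {0..1}" and "n \<ge> 1"
  shows "integral\<^sup>L (normalized_binomial n q) (\<lambda>x. x\<^sup>2) = q * (1 - q)"
proof -
  have "integral\<^sup>L (normalized_binomial n q) (\<lambda>x. x\<^sup>2)
      = binomial_expectation n q (\<lambda>t. ((real t - real n * q) / sqrt (real n))\<^sup>2)"
    by (rule integral_normalized_binomial[OF assms(1)]) simp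
  also have "\<dots> = binomial_expectation n q (\<lambda>t. 1 / real n * (real t - real n * q)\<^sup>2)"
    by (rule binomial_expectation_cong) (simp add: power_divide)
  also have "\<dots> = q * (1 - q)"
    using assms(2) by (simp only: binomial_expectation_cmult binomial_expectation_variance) simp
  finally show ?thesis .
qed

lemma bernoulli_variance_le: "q * (1 - q) \<le> (1 :: real) / 4"
  using sum_squares_ge_zero[of "q - 1 / 2" 0] by (simp add: power2_eq_square algebra_simps)

definition bernoulli_char :: "real \<Rightarrow> real \<Rightarrow> complex" where
  "bernoulli_char q s = complex_of_real q * iexp ((1 - q) * s) + complex_of_real (1 - q) * iexp (- (q * s))"

lemma char_normalized_binomial:
  assumes "q \<in> {0..1}"
  shows "char (normalized_binomial n q) t = bernoulli_char q (t / sqrt (real n)) ^ n"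
proof -
  define s where "s = t / sqrt (real n)"
  have iexp_split: "iexp (t * ((real m - real n * q) / sqrt (real n)))
      = iexp ((1 - q) * s) ^ m * iexp (- (q * s)) ^ (n - m)" if "m \<le> n" for m
  proof -
    have "\<i> * complex_of_real (t * ((real m - real n * q) / sqrt (real n)))
        = of_nat m * (\<i> * complex_of_real ((1 - q) * s)) + of_nat (n - m) * (\<i> * complex_of_real (- (q * s)))"
      using that by (simp add: s_def of_nat_diff algebra_simps diff_divide_distrib)
    then show ?thesis by (simp only: exp_add exp_of_nat_mult)
  qed
  have "char (normalized_binomial n q) t
      = (\<Sum>m\<le>n. (real (n choose m) * q ^ m * (1 - q) ^ (n - m)) *\<^sub>R iexp (t * ((real m - real n * q) / sqrt (real n))))"
    unfolding char_def normalized_binomial_def using assms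
    by (simp add: integral_distr expectation_binomial_pmf')
  also have "\<dots> = (\<Sum>m\<le>n. of_nat (n choose m) * (complex_of_real q * iexp ((1 - q) * s)) ^ m
      * (complex_of_real (1 - q) * iexp (- (q * s))) ^ (n - m))"
    by (intro sum.cong refl, subst iexp_split) (auto simp: scaleR_conv_of_real power_mult_distrib)
  also have "\<dots> = bernoulli_char q s ^ n"
    unfolding bernoulli_char_def by (rule binomial_ring[symmetric])
  finally show ?thesis unfolding s_def .
qed

lemma norm_bernoulli_char_le_1:
  assumes "q \<in> {0..1}"
  shows "norm (bernoulli_char q s) \<le> 1"
proof -
  have "norm (bernoulli_char q s) \<le> norm (complex_of_real q * iexp ((1 - q) * s))
      + norm (complex_of_real (1 - q) * iexp (- (q * s)))"
    unfolding bernoulli_char_def by (rule norm_triangle_ineq)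
  also have "\<dots> = 1"
    using assms by (simp add: norm_mult del: of_real_diff)
  finally show ?thesis .
qed

lemma norm_bernoulli_char_taylor:
  assumes "q \<in> {0..1}"
  shows "norm (bernoulli_char q s - complex_of_real (1 - q * (1 - q) * s\<^sup>2 / 2)) \<le> \<bar>s\<bar> ^ 3 / 6"
proof -
  define P where "P x = 1 + \<i> * complex_of_real x - complex_of_real (x\<^sup>2 / 2)" for x
  have taylor: "norm (iexp x - P x) \<le> \<bar>s\<bar> ^ 3 / 6" if "\<bar>x\<bar> \<le> \<bar>s\<bar>" for x
  proof -
    have "(\<i> * complex_of_real x)\<^sup>2 = - complex_of_real (x\<^sup>2)"
      by (simp add: power_mult_distrib)
    then have "(\<Sum>k \<le> 2. (\<i> * complex_of_real x) ^ k / fact k) = P x"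
      by (simp add: P_def numeral_2_eq_2 fact_numeral del: power_Suc)
    then have "norm (iexp x - P x) \<le> \<bar>x\<bar> ^ 3 / 6"
      using iexp_approx1[of x 2] by (simp add: fact_numeral numeral_3_eq_3)
    also have "\<dots> \<le> \<bar>s\<bar> ^ 3 / 6"
      using that by (simp add: power_mono)
    finally show ?thesis .
  qed
  have "q * P ((1 - q) * s) + (1 - q) * P (- (q * s)) = complex_of_real (1 - q * (1 - q) * s\<^sup>2 / 2)"
    by (simp add: P_def complex_eq_iff field_simps power2_eq_square)
  then have "bernoulli_char q s - complex_of_real (1 - q * (1 - q) * s\<^sup>2 / 2)
      = q * (iexp ((1 - q) * s) - P ((1 - q) * s)) + (1 - q) * (iexp (- (q * s)) - P (- (q * s)))"
    unfolding bernoulli_char_def by (simp add: algebra_simps)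
  also have "norm \<dots> \<le> q * (\<bar>s\<bar> ^ 3 / 6) + (1 - q) * (\<bar>s\<bar> ^ 3 / 6)"
  proof (rule norm_triangle_le[OF add_mono])
    have "\<bar>(1 - q) * s\<bar> \<le> \<bar>s\<bar>" "\<bar>- (q * s)\<bar> \<le> \<bar>s\<bar>"
      using assms by (auto simp: abs_mult intro!: mult_left_le_one_le)
    then have "norm (iexp ((1 - q) * s) - P ((1 - q) * s)) \<le> \<bar>s\<bar> ^ 3 / 6"
      and "norm (iexp (- (q * s)) - P (- (q * s))) \<le> \<bar>s\<bar> ^ 3 / 6"
      by (blast intro: taylor)+
    moreover have "q \<ge> 0" "1 - q \<ge> 0" using assms by auto
    ultimately show "norm (complex_of_real q * (iexp ((1 - q) * s) - P ((1 - q) * s))) \<le> q * (\<bar>s\<bar> ^ 3 / 6)"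
      and "norm (complex_of_real (1 - q) * (iexp (- (q * s)) - P (- (q * s)))) \<le> (1 - q) * (\<bar>s\<bar> ^ 3 / 6)"
      by (simp_all only: norm_mult norm_of_real abs_of_nonneg mult_left_mono)
  qed
  also have "q * (\<bar>s\<bar> ^ 3 / 6) + (1 - q) * (\<bar>s\<bar> ^ 3 / 6) = \<bar>s\<bar> ^ 3 / 6"
    by (simp add: field_simps)
  finally show ?thesis .
qed

lemma tendsto_one_minus_divide_power:
  fixes xs :: "nat \<Rightarrow> real" and ns :: "nat \<Rightarrow> nat"
  assumes ns: "filterlim ns at_top sequentially" and xs: "xs \<longlonglongrightarrow> x" and "\<And>j. xs j \<ge> 0"
  shows "(\<lambda>j. (1 - xs j / real (ns j)) ^ ns j) \<longlonglongrightarrow> exp (- x)"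
proof -
  have "x \<ge> 0" using assms by (intro LIMSEQ_le_const[OF xs]) auto
  have close: "eventually (\<lambda>j. norm ((1 - xs j / real (ns j)) ^ ns j - (1 + (- x) / real (ns j)) ^ ns j)
      \<le> \<bar>xs j - x\<bar>) sequentially"
  proof -
    have "eventually (\<lambda>j. xs j < x + 1) sequentially"
      using order_tendstoD(2)[OF xs] by simp
    moreover have "eventually (\<lambda>j. real (ns j) \<ge> x + 1) sequentially"
      using filterlim_compose[OF filterlim_real_sequentially ns] by (simp add: filterlim_at_top)
    ultimately show ?thesis
    proof eventually_elim
      case (elim j)
      then have "norm (1 - xs j / real (ns j)) \<le> 1" "norm (1 + (- x) / real (ns j)) \<le> 1"
        using \<open>x \<ge> 0\<close> assms(3)[of j] by (auto simp: field_simps)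
      from norm_power_diff[OF this, of "ns j"]
      have "norm ((1 - xs j / real (ns j)) ^ ns j - (1 + (- x) / real (ns j)) ^ ns j)
          \<le> real (ns j) * \<bar>(x - xs j) / real (ns j)\<bar>"
        by (simp add: diff_divide_distrib)
      also have "\<dots> = \<bar>xs j - x\<bar>"
        using elim \<open>x \<ge> 0\<close> by (simp add: abs_divide abs_minus_commute)
      finally show ?case .
    qed
  qed
  have "(\<lambda>j. \<bar>xs j - x\<bar>) \<longlonglongrightarrow> 0"
    using tendsto_diff[OF xs tendsto_const[of x]] by (simp add: tendsto_rabs_zero)
  then have "(\<lambda>j. (1 - xs j / real (ns j)) ^ ns j - (1 + (- x) / real (ns j)) ^ ns j) \<longlonglongrightarrow> 0"
    by (rule Lim_null_comparison[OF close])
  moreover have "(\<lambda>j. (1 + (- x) / real (ns j)) ^ ns j) \<longlonglongrightarrow> exp (- x)"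
    using filterlim_compose[OF tendsto_exp_limit_sequentially ns] .
  ultimately show ?thesis
    by (rule Lim_transform[rotated])
qed

lemma norm_char_normalized_binomial_approx:
  assumes "q \<in> {0..1}" and n_big: "real n \<ge> t\<^sup>2 + 1"
  shows "norm (char (normalized_binomial n q) t - (1 - q * (1 - q) * t\<^sup>2 / 2 / real n) ^ n)
       \<le> \<bar>t\<bar> ^ 3 / 6 * inverse (sqrt (real n))"
proof -
  define s where "s = t / sqrt (real n)"
  define w where "w = 1 - q * (1 - q) * t\<^sup>2 / 2 / real n"
  have n: "real n > 0" using n_big zero_le_power2[of t] by linarith
  have "q * (1 - q) * t\<^sup>2 \<le> 1 / 4 * t\<^sup>2"
    using bernoulli_variance_le by (rule mult_right_mono) simp
  then have "q * (1 - q) * t\<^sup>2 / 2 / real n \<le> 2"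
    using n_big n by (simp add: field_simps)
  moreover have "q * (1 - q) * t\<^sup>2 / 2 / real n \<ge> 0"
    using assms(1) n by simp
  ultimately have "\<bar>w\<bar> \<le> 1"
    unfolding w_def by linarith
  have w: "w = 1 - q * (1 - q) * s\<^sup>2 / 2"
    unfolding w_def s_def using n by (simp add: power_divide)
  have "norm (bernoulli_char q s ^ n - complex_of_real w ^ n) \<le> real n * norm (bernoulli_char q s - complex_of_real w)"
    using assms(1) \<open>\<bar>w\<bar> \<le> 1\<close> by (intro norm_power_diff norm_bernoulli_char_le_1) auto
  also have "\<dots> \<le> real n * (\<bar>s\<bar> ^ 3 / 6)"
    unfolding w using norm_bernoulli_char_taylor[OF assms(1)] by (intro mult_left_mono) auto
  also have "real n * (\<bar>s\<bar> ^ 3 / 6) = \<bar>t\<bar> ^ 3 / 6 * inverse (sqrt (real n))"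
    using n by (simp add: s_def abs_divide power_divide power3_eq_cube field_simps)
  finally show ?thesis
    using assms(1) by (simp add: w_def s_def char_normalized_binomial)
qed

lemma char_normalized_binomial_tendsto:
  fixes ns :: "nat \<Rightarrow> nat" and qs :: "nat \<Rightarrow> real"
  assumes ns: "filterlim ns at_top sequentially" and qs: "\<And>j. qs j \<in> {0..1}" and "qs \<longlonglongrightarrow> q"
  shows "(\<lambda>j. char (normalized_binomial (ns j) (qs j)) t) \<longlonglongrightarrow> exp (- (q * (1 - q) * t\<^sup>2 / 2))"
proof -
  define w where "w j = 1 - qs j * (1 - qs j) * t\<^sup>2 / 2 / real (ns j)" for j
  have w_lim: "(\<lambda>j. w j ^ ns j) \<longlonglongrightarrow> exp (- (q * (1 - q) * t\<^sup>2 / 2))"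
    unfolding w_def using qs
    by (intro tendsto_one_minus_divide_power ns tendsto_intros \<open>qs \<longlonglongrightarrow> q\<close>) auto
  have "eventually (\<lambda>j. real (ns j) \<ge> t\<^sup>2 + 1) sequentially"
    using filterlim_compose[OF filterlim_real_sequentially ns] by (simp add: filterlim_at_top)
  then have close: "eventually (\<lambda>j. norm (char (normalized_binomial (ns j) (qs j)) t - w j ^ ns j)
      \<le> \<bar>t\<bar> ^ 3 / 6 * inverse (sqrt (real (ns j)))) sequentially"
    by eventually_elim (use norm_char_normalized_binomial_approx[OF qs] in \<open>simp add: w_def\<close>)
  have "(\<lambda>j. \<bar>t\<bar> ^ 3 / 6 * inverse (sqrt (real (ns j)))) \<longlonglongrightarrow> \<bar>t\<bar> ^ 3 / 6 * 0"
    by (intro tendsto_mult tendsto_const tendsto_inverse_0_at_top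
        filterlim_compose[OF sqrt_at_top filterlim_compose[OF filterlim_real_sequentially ns]])
  then have "(\<lambda>j. char (normalized_binomial (ns j) (qs j)) t - w j ^ ns j) \<longlonglongrightarrow> 0"
    by (intro Lim_null_comparison[OF close]) simp
  from tendsto_add[OF this tendsto_of_real[OF w_lim]] show ?thesis
    by simp
qed

lemma weak_conv_normalized_binomial:
  fixes ns :: "nat \<Rightarrow> nat" and qs :: "nat \<Rightarrow> real"
  assumes "filterlim ns at_top sequentially" and "\<And>j. qs j \<in> {0..1}" and "qs \<longlonglongrightarrow> q" and "q \<in> {0..1}"
  shows "weak_conv_m (\<lambda>j. normalized_binomial (ns j) (qs j)) (centered_normal (sqrt (q * (1 - q))))"
proof (rule levy_continuity)
  fix t
  have "(sqrt (q * (1 - q)))\<^sup>2 = q * (1 - q)" using assms(4) by simp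
  then show "(\<lambda>j. char (normalized_binomial (ns j) (qs j)) t) \<longlonglongrightarrow> char (centered_normal (sqrt (q * (1 - q)))) t"
    unfolding char_centered_normal using char_normalized_binomial_tendsto[OF assms(1-3)] by simp
qed (simp_all add: real_distribution_normalized_binomial real_distribution_centered_normal)

section \<open>Convergence of absolute moments\<close>

definition truncated_powr :: "real \<Rightarrow> real \<Rightarrow> real \<Rightarrow> real" where
  "truncated_powr u R x = min \<bar>x\<bar> R powr u"

lemma truncated_powr_measurable [measurable]: "truncated_powr u R \<in> borel_measurable borel"
  unfolding truncated_powr_def by measurable

lemma isCont_truncated_powr:
  assumes "u > 0" and "R \<ge> 0"
  shows "isCont (truncated_powr u R) x"
proof -
  have "continuous_on UNIV (\<lambda>x. min \<bar>x\<bar> R powr u)"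
    using assms by (intro continuous_on_powr' continuous_intros) auto
  then show ?thesis
    unfolding truncated_powr_def by (simp add: continuous_on_eq_continuous_at)
qed

lemma truncated_powr_bound: "R > 0 \<Longrightarrow> u > 0 \<Longrightarrow> \<bar>truncated_powr u R x\<bar> \<le> R powr u"
  unfolding truncated_powr_def by (auto intro!: powr_mono2 simp: min_def)

lemma truncated_powr_error:
  assumes "0 < u" "u \<le> 2" and "R > 0"
  shows "0 \<le> \<bar>x\<bar> powr u - truncated_powr u R x"
    and "\<bar>x\<bar> powr u - truncated_powr u R x \<le> R powr (u - 2) * x\<^sup>2"
proof -
  consider "\<bar>x\<bar> \<le> R" | "\<bar>x\<bar> > R" by linarith
  then have "0 \<le> \<bar>x\<bar> powr u - truncated_powr u R x \<and> \<bar>x\<bar> powr u - truncated_powr u R x \<le> R powr (u - 2) * x\<^sup>2"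
  proof cases
    case 2
    have "\<bar>x\<bar> powr u = \<bar>x\<bar> powr (u - 2) * \<bar>x\<bar> powr 2"
      using powr_add[of "\<bar>x\<bar>" "u - 2" 2] by simp
    also have "\<dots> = \<bar>x\<bar> powr (u - 2) * x\<^sup>2"
      using 2 assms by (simp add: powr_numeral)
    also have "\<dots> \<le> R powr (u - 2) * x\<^sup>2"
      using 2 assms by (intro mult_right_mono powr_mono2') auto
    finally have "\<bar>x\<bar> powr u \<le> R powr (u - 2) * x\<^sup>2" .
    moreover have "truncated_powr u R x = R powr u"
      using 2 by (simp add: truncated_powr_def)
    moreover have "R powr u \<le> \<bar>x\<bar> powr u"
      using 2 assms by (intro powr_mono2) auto
    ultimately show ?thesis
      using powr_ge_zero[of R u] by linarith
  qed (simp add: truncated_powr_def)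
  then show "0 \<le> \<bar>x\<bar> powr u - truncated_powr u R x"
    and "\<bar>x\<bar> powr u - truncated_powr u R x \<le> R powr (u - 2) * x\<^sup>2" by auto
qed

lemma abs_moment_truncation_error:
  assumes "sets M = sets borel"
    and "integrable M (\<lambda>x. \<bar>x\<bar> powr u)" and "integrable M (\<lambda>x. x\<^sup>2)"
    and "0 < u" "u \<le> 2" and "R > 0"
  shows "\<bar>(\<integral>x. \<bar>x\<bar> powr u \<partial>M) - integral\<^sup>L M (truncated_powr u R)\<bar> \<le> R powr (u - 2) * (\<integral>x. x\<^sup>2 \<partial>M)"
proof -
  note error = truncated_powr_error[OF assms(4-6)]
  have "truncated_powr u R \<in> borel_measurable M"
    by (subst measurable_cong_sets[OF assms(1) refl]) simp
  then have "integrable M (truncated_powr u R)"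
    using error(1) by (intro Bochner_Integration.integrable_bound[OF assms(2)])
      (auto simp: truncated_powr_def)
  then have "(\<integral>x. \<bar>x\<bar> powr u \<partial>M) - integral\<^sup>L M (truncated_powr u R)
      = (\<integral>x. \<bar>x\<bar> powr u - truncated_powr u R x \<partial>M)"
    using Bochner_Integration.integral_diff[OF assms(2)] by simp
  moreover have "0 \<le> (\<integral>x. \<bar>x\<bar> powr u - truncated_powr u R x \<partial>M)"
    using error(1) by (rule integral_nonneg_AE[OF AE_I2])
  moreover have "(\<integral>x. \<bar>x\<bar> powr u - truncated_powr u R x \<partial>M) \<le> (\<integral>x. R powr (u - 2) * x\<^sup>2 \<partial>M)"
    using error(2) assms(2,3) \<open>integrable M (truncated_powr u R)\<close> by (intro integral_mono) auto
  ultimately show ?thesis by simp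
qed

text \<open>
  Truncating \<open>|x|\<^sup>u\<close> at level \<open>R\<close> changes every moment by at most \<open>R\<^bsup>u-2\<^esup> E x\<^sup>2\<close>, which is small
  uniformly in \<open>j\<close>; the truncated moments converge by weak convergence.
\<close>

lemma weak_conv_abs_moment_tendsto:
  fixes M :: "nat \<Rightarrow> real measure"
  assumes M: "\<And>j. real_distribution (M j)" and N: "real_distribution N" and "weak_conv_m M N"
    and u: "0 < u" "u < 2"
    and M_int: "\<And>j. integrable (M j) (\<lambda>x. \<bar>x\<bar> powr u)" "\<And>j. integrable (M j) (\<lambda>x. x\<^sup>2)"
    and N_int: "integrable N (\<lambda>x. \<bar>x\<bar> powr u)" "integrable N (\<lambda>x. x\<^sup>2)"
    and M_var: "\<And>j. (\<integral>x. x\<^sup>2 \<partial>M j) \<le> V" and N_var: "(\<integral>x. x\<^sup>2 \<partial>N) \<le> V"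
  shows "(\<lambda>j. \<integral>x. \<bar>x\<bar> powr u \<partial>M j) \<longlonglongrightarrow> (\<integral>x. \<bar>x\<bar> powr u \<partial>N)"
proof (rule tendstoI)
  fix \<epsilon> :: real assume "\<epsilon> > 0"
  have "0 \<le> (\<integral>x. x\<^sup>2 \<partial>N)" by (rule integral_nonneg_AE) simp
  then have "V \<ge> 0" using N_var by linarith
  define R where "R = (\<epsilon> / 4 / (V + 1)) powr (1 / (u - 2))"
  have R: "R > 0" unfolding R_def using \<open>\<epsilon> > 0\<close> \<open>V \<ge> 0\<close> by simp
  have R_powr: "R powr (u - 2) = \<epsilon> / 4 / (V + 1)"
    unfolding R_def using \<open>\<epsilon> > 0\<close> \<open>V \<ge> 0\<close> u by (simp add: powr_powr)
  have small: "R powr (u - 2) * W \<le> \<epsilon> / 4" if "W \<le> V" for W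
  proof -
    have "R powr (u - 2) * W \<le> R powr (u - 2) * (V + 1)"
      using that by (intro mult_left_mono) auto
    also have "\<dots> = \<epsilon> / 4"
      using \<open>V \<ge> 0\<close> unfolding R_powr by (simp add: field_simps)
    finally show ?thesis .
  qed
  have gap_N: "\<bar>(\<integral>x. \<bar>x\<bar> powr u \<partial>N) - integral\<^sup>L N (truncated_powr u R)\<bar> \<le> \<epsilon> / 4"
    using abs_moment_truncation_error[OF real_distribution.events_eq_borel[OF N] N_int _ _ R] u
      small[OF N_var] by simp
  have "(\<lambda>j. integral\<^sup>L (M j) (truncated_powr u R)) \<longlonglongrightarrow> integral\<^sup>L N (truncated_powr u R)"
    by (rule weak_conv_imp_integral_bdd_continuous_conv[OF M N \<open>weak_conv_m M N\<close>, where B = "R powr u"])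
      (use isCont_truncated_powr truncated_powr_bound R u in auto)
  then have "eventually (\<lambda>j. dist (integral\<^sup>L (M j) (truncated_powr u R)) (integral\<^sup>L N (truncated_powr u R)) < \<epsilon> / 4) sequentially"
    using \<open>\<epsilon> > 0\<close> by (intro tendstoD) auto
  then show "eventually (\<lambda>j. dist (\<integral>x. \<bar>x\<bar> powr u \<partial>M j) (\<integral>x. \<bar>x\<bar> powr u \<partial>N) < \<epsilon>) sequentially"
  proof eventually_elim
    case (elim j)
    have "\<bar>(\<integral>x. \<bar>x\<bar> powr u \<partial>M j) - integral\<^sup>L (M j) (truncated_powr u R)\<bar> \<le> \<epsilon> / 4"
      using abs_moment_truncation_error[OF real_distribution.events_eq_borel[OF M] M_int(1,2)
          u(1) less_imp_le[OF u(2)] R] small[OF M_var] by (rule order_trans)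
    then show ?case
      using elim gap_N \<open>\<epsilon> > 0\<close> unfolding dist_real_def by linarith
  qed
qed

definition binomial_abs_moment :: "real \<Rightarrow> nat \<Rightarrow> real \<Rightarrow> real" where
  "binomial_abs_moment u n q = (\<integral>x. \<bar>x\<bar> powr u \<partial>normalized_binomial n q)"

lemma binomial_abs_moment_eq:
  "q \<in> {0..1} \<Longrightarrow>
    binomial_abs_moment u n q = binomial_expectation n q (\<lambda>t. \<bar>(real t - real n * q) / sqrt (real n)\<bar> powr u)"
  unfolding binomial_abs_moment_def by (rule integral_normalized_binomial) simp_all

definition gaussian_abs_moment :: "real \<Rightarrow> real \<Rightarrow> real" where
  "gaussian_abs_moment u q = Cu u * (q * (1 - q)) powr (u / 2)"

lemma normalized_binomial_second_moment_le:
  assumes "q \<in> {0..1}"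
  shows "(\<integral>x. x\<^sup>2 \<partial>normalized_binomial n q) \<le> 1 / 4"
  using normalized_binomial_variance[OF assms] integral_normalized_binomial[OF assms, of "\<lambda>x. x\<^sup>2" 0]
    bernoulli_variance_le[of q]
  by (cases "n = 0") auto

lemma binomial_abs_moment_2:
  assumes "q \<in> {0..1}" and "n \<ge> 1"
  shows "binomial_abs_moment 2 n q = q * (1 - q)"
proof -
  have "\<bar>x\<bar> powr 2 = x\<^sup>2" for x :: real
    by (cases "x = 0") (simp_all add: powr_numeral)
  then show ?thesis
    unfolding binomial_abs_moment_def using normalized_binomial_variance[OF assms] by simp
qed

lemma gaussian_abs_moment_2: "q \<in> {0..1} \<Longrightarrow> gaussian_abs_moment 2 q = q * (1 - q)"
  unfolding gaussian_abs_moment_def by (simp add: Cu_2)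

lemma continuous_on_gaussian_abs_moment:
  "u > 0 \<Longrightarrow> continuous_on {0..1} (gaussian_abs_moment u)"
  unfolding gaussian_abs_moment_def by (intro continuous_intros continuous_on_powr') auto

lemma binomial_abs_moment_tendsto:
  fixes ns :: "nat \<Rightarrow> nat" and qs :: "nat \<Rightarrow> real"
  assumes u: "0 < u" "u \<le> 2" and ns: "filterlim ns at_top sequentially"
    and qs: "\<And>j. qs j \<in> {0..1}" "qs \<longlonglongrightarrow> q" and q: "q \<in> {0..1}"
  shows "(\<lambda>j. binomial_abs_moment u (ns j) (qs j)) \<longlonglongrightarrow> gaussian_abs_moment u q"
proof (cases "u = 2")
  case True
  have "(\<lambda>j. qs j * (1 - qs j)) \<longlonglongrightarrow> q * (1 - q)"
    by (intro tendsto_intros qs)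
  moreover have "eventually (\<lambda>j. ns j \<ge> 1) sequentially"
    using ns by (simp add: filterlim_at_top)
  then have "eventually (\<lambda>j. qs j * (1 - qs j) = binomial_abs_moment u (ns j) (qs j)) sequentially"
    by eventually_elim (simp add: True binomial_abs_moment_2[OF qs(1)])
  ultimately show ?thesis
    using q by (simp add: True gaussian_abs_moment_2 tendsto_cong)
next
  case False
  define \<sigma> where "\<sigma> = sqrt (q * (1 - q))"
  have \<sigma>: "\<sigma> \<ge> 0" "\<sigma>\<^sup>2 = q * (1 - q)"
    using q by (simp_all add: \<sigma>_def)
  have \<sigma>_powr: "\<sigma> powr u = (q * (1 - q)) powr (u / 2)"
    using q by (simp add: \<sigma>_def powr_half_sqrt[symmetric] powr_powr)
  have "(\<lambda>j. binomial_abs_moment u (ns j) (qs j)) \<longlonglongrightarrow> (\<integral>x. \<bar>x\<bar> powr u \<partial>centered_normal \<sigma>)"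
    unfolding binomial_abs_moment_def
  proof (rule weak_conv_abs_moment_tendsto[where V = "1 / 4"])
    show "weak_conv_m (\<lambda>j. normalized_binomial (ns j) (qs j)) (centered_normal \<sigma>)"
      unfolding \<sigma>_def by (rule weak_conv_normalized_binomial[OF ns qs q])
    show "integrable (centered_normal \<sigma>) (\<lambda>x. \<bar>x\<bar> powr u)"
      using centered_normal_abs_moment[of u \<sigma>] u \<sigma> by (simp add: has_bochner_integral_iff)
    show "integrable (centered_normal \<sigma>) (\<lambda>x. x\<^sup>2)" "(\<integral>x. x\<^sup>2 \<partial>centered_normal \<sigma>) \<le> 1 / 4"
      using centered_normal_variance[of \<sigma>] \<sigma> bernoulli_variance_le[of q]
      by (simp_all add: has_bochner_integral_iff)
    show "(\<integral>x. x\<^sup>2 \<partial>normalized_binomial (ns j) (qs j)) \<le> 1 / 4" for j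
      by (rule normalized_binomial_second_moment_le[OF qs(1)])
  qed (use u False in \<open>simp_all add: real_distribution_normalized_binomial
        real_distribution_centered_normal integrable_normalized_binomial[OF qs(1)]\<close>)
  also have "(\<integral>x. \<bar>x\<bar> powr u \<partial>centered_normal \<sigma>) = gaussian_abs_moment u q"
    using centered_normal_abs_moment[of u \<sigma>] u \<sigma> \<sigma>_powr
    by (simp add: has_bochner_integral_iff gaussian_abs_moment_def)
  finally show ?thesis .
qed

text \<open>
  Uniformity in \<open>q\<close> comes from compactness: a sequence of counterexamples has a subsequence
  along which \<open>q\<close> converges, and there the joint convergence of \<open>binomial_abs_moment_tendsto\<close> applies.
\<close>

lemma eventually_binomial_abs_moment_le:
  assumes u: "0 < u" "u \<le> 2" and "{a..b} \<subseteq> {0..1}" and "\<delta> > 0"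
  shows "eventually (\<lambda>n. \<forall>q\<in>{a..b}. binomial_abs_moment u n q \<le> gaussian_abs_moment u q + \<delta>) sequentially"
proof (rule ccontr)
  assume "\<not> ?thesis"
  then obtain r :: "nat \<Rightarrow> nat" where r: "strict_mono r"
    and "\<And>j. \<exists>q\<in>{a..b}. binomial_abs_moment u (r j) q > gaussian_abs_moment u q + \<delta>"
    using not_eventually_sequentiallyD by (force simp: not_le)
  then obtain qs where qs: "\<And>j. qs j \<in> {a..b}"
    and above: "\<And>j. binomial_abs_moment u (r j) (qs j) > gaussian_abs_moment u (qs j) + \<delta>"
    by metis
  obtain q s where q: "q \<in> {a..b}" and s: "strict_mono (s :: nat \<Rightarrow> nat)" and lim: "(qs \<circ> s) \<longlonglongrightarrow> q"
    using seq_compactE[OF compact_imp_seq_compact[OF compact_Icc], of qs a b] qs by blast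
  have qs01: "(qs \<circ> s) j \<in> {0..1}" for j
    using qs[of "s j"] assms(3) by auto
  have q01: "q \<in> {0..1}"
    using q assms(3) by auto
  have "filterlim (r \<circ> s) at_top sequentially"
    using filterlim_subseq[OF strict_mono_o[OF r s]] .
  from binomial_abs_moment_tendsto[OF u this qs01 lim q01]
  have gap_lim: "(\<lambda>j. binomial_abs_moment u ((r \<circ> s) j) ((qs \<circ> s) j) - gaussian_abs_moment u ((qs \<circ> s) j))
      \<longlonglongrightarrow> gaussian_abs_moment u q - gaussian_abs_moment u q"
    using continuous_on_tendsto_compose[OF continuous_on_gaussian_abs_moment[OF u(1)] lim q01] qs01
    by (intro tendsto_diff) (auto simp: o_def)
  have gap: "\<delta> \<le> binomial_abs_moment u ((r \<circ> s) j) ((qs \<circ> s) j) - gaussian_abs_moment u ((qs \<circ> s) j)"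
    for j using above[of "s j"] by simp
  have "\<delta> \<le> gaussian_abs_moment u q - gaussian_abs_moment u q"
    by (rule LIMSEQ_le_const[OF gap_lim]) (use gap in blast)
  then show False using \<open>\<delta> > 0\<close> by simp
qed

lemma powr_le_tangent:
  fixes s c y :: real
  assumes "0 < s" "s \<le> 1" and "c > 0" and "y \<ge> 0"
  shows "y powr s \<le> c powr s + s * c powr (s - 1) * (y - c)"
proof -
  have "(y / c) powr s \<le> s * (y / c) + (1 - s)"
    using Youngs_inequality_0[of s "1 - s" "y / c" 1] assms by (cases "y = 0") auto
  then have "c powr s * (y / c) powr s \<le> c powr s * (s * (y / c) + (1 - s))"
    by (rule mult_left_mono) simp
  moreover have "c powr s * (y / c) powr s = y powr s"
    using assms by (simp add: powr_divide)
  moreover have "c powr s * (s * (y / c) + (1 - s)) = c powr s + s * c powr (s - 1) * (y - c)"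
    using assms by (simp add: powr_diff field_simps)
  ultimately show ?thesis by simp
qed

text \<open>Jensen's inequality for the concave function \<open>q \<mapsto> (q (1 - q))\<^bsup>u/2\<^esup>\<close>, via its tangent at \<open>m\<close>.\<close>

lemma sum_gaussian_abs_moment_le:
  assumes u: "0 < u" "u \<le> 2" and m: "0 < m" "m < 1" and "finite I"
    and x: "\<And>i. i \<in> I \<Longrightarrow> x i \<in> {0..1}" and x_mean: "(\<Sum>i\<in>I. x i) = real (card I) * m"
  shows "(\<Sum>i\<in>I. gaussian_abs_moment u (x i)) \<le> real (card I) * gaussian_abs_moment u m"
proof -
  define slope where "slope = Cu u * (u / 2) * (m * (1 - m)) powr (u / 2 - 1) * (1 - 2 * m)"
  have tangent: "gaussian_abs_moment u y \<le> gaussian_abs_moment u m + slope * (y - m)" if "y \<in> {0..1}" for y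
  proof -
    have "y * (1 - y) - m * (1 - m) \<le> (1 - 2 * m) * (y - m)"
      using sum_squares_ge_zero[of "y - m" 0] by (simp add: power2_eq_square algebra_simps)
    then have "(u / 2) * (m * (1 - m)) powr (u / 2 - 1) * (y * (1 - y) - m * (1 - m))
        \<le> (u / 2) * (m * (1 - m)) powr (u / 2 - 1) * ((1 - 2 * m) * (y - m))"
      using u by (intro mult_left_mono) auto
    moreover have "(y * (1 - y)) powr (u / 2)
        \<le> (m * (1 - m)) powr (u / 2) + (u / 2) * (m * (1 - m)) powr (u / 2 - 1) * (y * (1 - y) - m * (1 - m))"
      by (rule powr_le_tangent) (use u m that in auto)
    ultimately have "(y * (1 - y)) powr (u / 2)
        \<le> (m * (1 - m)) powr (u / 2) + (u / 2) * (m * (1 - m)) powr (u / 2 - 1) * ((1 - 2 * m) * (y - m))"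
      by linarith
    then have "Cu u * (y * (1 - y)) powr (u / 2)
        \<le> Cu u * ((m * (1 - m)) powr (u / 2) + (u / 2) * (m * (1 - m)) powr (u / 2 - 1) * ((1 - 2 * m) * (y - m)))"
      using Cu_nonneg[of u] u by (intro mult_left_mono) auto
    then show ?thesis
      unfolding gaussian_abs_moment_def slope_def by (simp add: algebra_simps)
  qed
  have "(\<Sum>i\<in>I. gaussian_abs_moment u (x i)) \<le> (\<Sum>i\<in>I. gaussian_abs_moment u m + slope * (x i - m))"
    using tangent x by (intro sum_mono) auto
  also have "\<dots> = real (card I) * gaussian_abs_moment u m + slope * ((\<Sum>i\<in>I. x i) - real (card I) * m)"
    by (simp add: sum.distrib sum_distrib_left sum_subtractf algebra_simps)
  finally show ?thesis using x_mean by simp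
qed

section \<open>The output space of the subset selection mechanism\<close>

lemma card_subsets_containing:
  assumes "finite A" and "B \<subseteq> A"
  shows "card {S. S \<subseteq> A \<and> card S = d \<and> B \<subseteq> S}
       = (if card B \<le> d then (card A - card B) choose (d - card B) else 0)"
proof (cases "card B \<le> d")
  case True
  have "finite B" using assms finite_subset by blast
  have "bij_betw (\<lambda>S. S - B) {S. S \<subseteq> A \<and> card S = d \<and> B \<subseteq> S} {T. T \<subseteq> A - B \<and> card T = d - card B}"
  proof (rule bij_betw_byWitness[where f' = "\<lambda>T. T \<union> B"])
    show "(\<lambda>S. S - B) ` {S. S \<subseteq> A \<and> card S = d \<and> B \<subseteq> S} \<subseteq> {T. T \<subseteq> A - B \<and> card T = d - card B}"
      using assms by (auto simp: card_Diff_subset[OF \<open>finite B\<close>] dest: finite_subset)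
    show "(\<lambda>T. T \<union> B) ` {T. T \<subseteq> A - B \<and> card T = d - card B} \<subseteq> {S. S \<subseteq> A \<and> card S = d \<and> B \<subseteq> S}"
    proof
      fix S assume "S \<in> (\<lambda>T. T \<union> B) ` {T. T \<subseteq> A - B \<and> card T = d - card B}"
      then obtain T where T: "T \<subseteq> A - B" "card T = d - card B" and S: "S = T \<union> B" by auto
      then have "finite T" using assms finite_subset by blast
      then have "card (T \<union> B) = card T + card B"
        using T \<open>finite B\<close> by (subst card_Un_disjoint) auto
      then show "S \<in> {S. S \<subseteq> A \<and> card S = d \<and> B \<subseteq> S}"
        using T S True assms by auto
    qed
  qed auto
  then have "card {S. S \<subseteq> A \<and> card S = d \<and> B \<subseteq> S} = card (A - B) choose (d - card B)"
    using assms by (simp add: bij_betw_same_card n_subsets)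
  then show ?thesis
    using True assms \<open>finite B\<close> by (simp add: card_Diff_subset)
next
  case False
  then have empty: "{S. S \<subseteq> A \<and> card S = d \<and> B \<subseteq> S} = {}"
    using assms by (auto dest: card_mono[rotated] finite_subset)
  show ?thesis unfolding empty using False by simp
qed

definition indicator_vector :: "nat \<Rightarrow> nat set \<Rightarrow> nat \<Rightarrow> nat" where
  "indicator_vector k S = restrict (\<lambda>i. of_bool (i \<in> S)) {1..k}"

lemma Yset_values: "y \<in> Yset k d \<Longrightarrow> i \<in> {1..k} \<Longrightarrow> y i \<in> {0, 1}"
  by (auto simp: Yset_def PiE_def Pi_def)

lemma finite_Yset: "finite (Yset k d)"
  by (rule finite_subset[of _ "PiE {1..k} (\<lambda>_. {0, 1})"]) (auto simp: Yset_def finite_PiE)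

lemma bij_betw_indicator_vector:
  "bij_betw (indicator_vector k) {S. S \<subseteq> {1..k} \<and> card S = d} (Yset k d)"
proof (rule bij_betw_byWitness[where f' = "\<lambda>y. {i\<in>{1..k}. y i = 1}"])
  have ones: "(\<Sum>i\<in>{1..k}. y i) = card {i\<in>{1..k}. y i = 1}" if "y \<in> PiE {1..k} (\<lambda>_. {0, 1})" for y
  proof -
    have "(\<Sum>i\<in>{1..k}. y i) = (\<Sum>i\<in>{1..k}. if y i = 1 then 1 else 0)"
      using that by (intro sum.cong) (auto simp: PiE_def Pi_def)
    then show ?thesis by (simp add: sum.If_cases Int_def)
  qed
  show "\<forall>y\<in>Yset k d. indicator_vector k {i \<in> {1..k}. y i = 1} = y"
    by (auto simp: Yset_def indicator_vector_def PiE_def extensional_def Pi_def fun_eq_iff)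
  show "indicator_vector k ` {S. S \<subseteq> {1..k} \<and> card S = d} \<subseteq> Yset k d"
  proof clarify
    fix S assume S: "S \<subseteq> {1..k}"
    have "{i \<in> {1..k}. indicator_vector k S i = 1} = S"
      using S by (auto simp: indicator_vector_def)
    moreover have "indicator_vector k S \<in> PiE {1..k} (\<lambda>_. {0, 1})"
      by (auto simp: indicator_vector_def)
    ultimately show "indicator_vector k S \<in> Yset k (card S)"
      using ones by (simp add: Yset_def)
  qed
  show "(\<lambda>y. {i \<in> {1..k}. y i = 1}) ` Yset k d \<subseteq> {S. S \<subseteq> {1..k} \<and> card S = d}"
    using ones by (auto simp: Yset_def)
qed (auto simp: indicator_vector_def)

lemma sum_Yset_reindex:
  "(\<Sum>y\<in>Yset k d. f y) = (\<Sum>S | S \<subseteq> {1..k} \<and> card S = d. f (indicator_vector k S))"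
  using sum.reindex_bij_betw[OF bij_betw_indicator_vector, of f k d] by simp

lemma card_Yset: "card (Yset k d) = k choose d"
  using n_subsets[of "{1..k}" d] bij_betw_same_card[OF bij_betw_indicator_vector[of k d]] by simp

lemma sum_Yset_subset_ones:
  assumes "B \<subseteq> {1..k}"
  shows "(\<Sum>y\<in>Yset k d. \<Prod>i\<in>B. real (y i))
       = (if card B \<le> d then real ((k - card B) choose (d - card B)) else 0)"
proof -
  have "(\<Sum>y\<in>Yset k d. \<Prod>i\<in>B. real (y i)) = (\<Sum>S | S \<subseteq> {1..k} \<and> card S = d. if B \<subseteq> S then 1 else 0)"
    unfolding sum_Yset_reindex
  proof (intro sum.cong refl)
    fix S
    have "finite B" using assms finite_subset by blast
    have "(\<Prod>i\<in>B. real (indicator_vector k S i)) = (\<Prod>i\<in>B. of_bool (i \<in> S))"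
      using assms by (intro prod.cong) (auto simp: indicator_vector_def)
    also have "\<dots> = (if B \<subseteq> S then 1 else 0)"
      using \<open>finite B\<close> by (auto simp: prod_zero_iff subset_iff intro!: prod.neutral)
    finally show "(\<Prod>i\<in>B. real (indicator_vector k S i)) = (if B \<subseteq> S then 1 else 0)" .
  qed
  also have "\<dots> = real (card {S. S \<subseteq> {1..k} \<and> card S = d \<and> B \<subseteq> S})"
    by (simp add: sum.If_cases) (simp only: Int_def mem_Collect_eq conj_ac)
  finally show ?thesis
    using assms by (simp add: card_subsets_containing)
qed

lemma sum_Yset_coord_products:
  assumes "i \<in> {1..k}" and "j \<in> {1..k}" and "d \<ge> 1"
  shows "(\<Sum>y\<in>Yset k d. real (y j) * real (y i))
       = (if i = j then real ((k - 1) choose (d - 1))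
          else if d \<ge> 2 then real ((k - 2) choose (d - 2)) else 0)"
proof (cases "i = j")
  case True
  have "(\<Sum>y\<in>Yset k d. real (y j) * real (y i)) = (\<Sum>y\<in>Yset k d. real (y i))"
    using True Yset_values[OF _ assms(1)] by (intro sum.cong refl) fastforce
  then show ?thesis
    using True sum_Yset_subset_ones[of "{i}" k d] assms by simp
next
  case False
  then show ?thesis
    using sum_Yset_subset_ones[of "{j, i}" k d] assms by (simp add: mult.commute numeral_2_eq_2)
qed

section \<open>The risk of the empirical estimator\<close>

lemma powr_abs_affine_error:
  fixes A B p q u :: real
  assumes "A > 0" and "n \<ge> 1" and "A * q - B = p"
  shows "\<bar>A * (real t / real n) - B - p\<bar> powr u
       = A powr u * real n powr (- u / 2) * \<bar>(real t - real n * q) / sqrt (real n)\<bar> powr u"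
proof -
  have n: "real n > 0" using assms(2) by simp
  have "A * (real t / real n) - B - p = A * ((real t - real n * q) / real n)"
    using n by (simp add: assms(3)[symmetric] field_simps)
  then have "\<bar>A * (real t / real n) - B - p\<bar> powr u = A powr u * (\<bar>real t - real n * q\<bar> powr u / real n powr u)"
    using assms(1) n by (simp add: abs_mult powr_mult powr_divide)
  moreover have "real n powr u = real n powr (u / 2) * real n powr (u / 2)"
    by (simp flip: powr_add)
  moreover have "\<bar>(real t - real n * q) / sqrt (real n)\<bar> powr u = \<bar>real t - real n * q\<bar> powr u / real n powr (u / 2)"
    using n by (simp add: abs_divide powr_divide powr_half_sqrt[symmetric] powr_powr)
  moreover have "real n powr (- u / 2) = 1 / real n powr (u / 2)"
    by (simp add: powr_minus_divide)
  moreover have "real n powr (u / 2) > 0"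
    using n by simp
  ultimately show ?thesis
    by (simp only:) (simp add: field_simps)
qed

lemma tendsto_of_lower_bound_and_eventually_le:
  fixes a x :: "nat \<Rightarrow> real"
  assumes "a \<longlonglongrightarrow> L" and "eventually (\<lambda>n. a n \<le> x n) sequentially"
    and "\<And>\<delta>. \<delta> > 0 \<Longrightarrow> eventually (\<lambda>n. x n \<le> L + \<delta>) sequentially"
  shows "x \<longlonglongrightarrow> L"
proof (rule tendstoI)
  fix \<epsilon> :: real assume "\<epsilon> > 0"
  have "eventually (\<lambda>n. L - \<epsilon> < a n) sequentially"
    using order_tendstoD(1)[OF assms(1)] \<open>\<epsilon> > 0\<close> by simp
  moreover note assms(2)
  moreover have "eventually (\<lambda>n. x n \<le> L + \<epsilon> / 2) sequentially"
    using assms(3) \<open>\<epsilon> > 0\<close> by simp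
  ultimately show "eventually (\<lambda>n. dist (x n) L < \<epsilon>) sequentially"
    by eventually_elim (auto simp: dist_real_def)
qed

lemma smallo_of_scaled_tendsto:
  fixes x :: "nat \<Rightarrow> real"
  assumes "(\<lambda>n. real n powr a * x n) \<longlonglongrightarrow> T"
  shows "(\<lambda>n. x n - T / real n powr a) \<in> o(\<lambda>n. real n powr (- a))"
proof (rule smalloI_tendsto)
  have "eventually (\<lambda>n. real n powr a * x n - T = (x n - T / real n powr a) / real n powr (- a)) sequentially"
    using eventually_ge_at_top[of 1]
    by eventually_elim (simp add: powr_minus field_simps)
  moreover have "(\<lambda>n. real n powr a * x n - T) \<longlonglongrightarrow> 0"
    using tendsto_diff[OF assms tendsto_const[of T]] by simp
  ultimately show "(\<lambda>n. (x n - T / real n powr a) / real n powr (- a)) \<longlonglongrightarrow> 0"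
    by (rule Lim_transform_eventually[rotated])
  show "eventually (\<lambda>n. real n powr (- a) \<noteq> 0) at_top"
    using eventually_ge_at_top[of 1] by eventually_elim simp
qed

locale subset_mechanism =
  fixes k d :: nat and eps :: real
  assumes k: "k \<ge> 2" and d: "1 \<le> d" "d \<le> k - 1" and eps: "eps > 0"
begin

text \<open>
  \<open>alpha\<close> and \<open>beta\<close> are the probabilities that coordinate \<open>i\<close> of the output is set when the
  input is \<open>i\<close>, resp. a letter \<open>j \<noteq> i\<close>; \<open>scale\<close> and \<open>shift\<close> are the coefficients of the
  empirical estimator \<open>phat\<close>.
\<close>

definition alpha :: real where
  "alpha = exp eps * real d / (real d * exp eps + real k - real d)"

definition beta :: real where
  "beta = real d * (real k - 1 + (exp eps - 1) * (real d - 1))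
     / ((real k - 1) * (real d * exp eps + real k - real d))"

definition scale :: real where
  "scale = ((real k - 1) * exp eps + (real k - 1) * (real k - real d) / real d)
     / ((real k - real d) * (exp eps - 1))"

definition shift :: real where
  "shift = ((real d - 1) * exp eps + real k - real d) / ((real k - real d) * (exp eps - 1))"

lemma parameters_pos:
  shows "real d > 0" and "real k - real d > 0" and "real k - 1 > 0" and "exp eps - 1 > 0"
    and "real d * exp eps + real k - real d > 0"
proof -
  show "real d > 0" "real k - real d > 0" "real k - 1 > 0" "exp eps - 1 > 0"
    using k d eps by auto
  moreover have "real d * exp eps > 0" using d by simp
  ultimately show "real d * exp eps + real k - real d > 0" by linarith
qed

lemma scale_alpha_beta: "scale * (alpha - beta) = 1"
  and scale_beta: "scale * beta = shift"
  and mean_marginal: "beta + (alpha - beta) / real k = real d / real k"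
  and Mconst_eq: "Mconst k eps d = scale\<^sup>2 * (real d / real k * (1 - real d / real k))"
proof -
  \<comment> \<open>Naming the factors of the denominators lets \<open>field_simps\<close> clear them.\<close>
  define K D e where "K = real k" and "D = real d" and "e = exp eps"
  define S P Q c where "S = D * e + K - D" and "P = K - D" and "Q = K - 1" and "c = e - 1"
  have "S > 0" "P > 0" "Q > 0" "c > 0" "D > 0"
    using parameters_pos by (simp_all add: S_def P_def Q_def c_def K_def D_def e_def)
  then have nz: "S \<noteq> 0" "P \<noteq> 0" "Q \<noteq> 0" "c \<noteq> 0" "D \<noteq> 0" "K \<noteq> 0"
    by (auto simp: P_def)
  have atoms: "D * e + K - D = S" "K - D = P" "K - 1 = Q" "e - 1 = c"
    by (simp_all add: S_def P_def Q_def c_def)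
  note defs = alpha_def beta_def scale_def shift_def Mconst_def dobj_def
    K_def[symmetric] D_def[symmetric] e_def[symmetric]
  have "scale * (alpha - beta) - 1 = 0"
    unfolding defs atoms using nz
    by (simp add: field_simps; simp add: S_def P_def Q_def c_def algebra_simps)
  then show "scale * (alpha - beta) = 1" by simp
  have "scale * beta - shift = 0"
    unfolding defs atoms using nz
    by (simp add: field_simps; simp add: S_def P_def Q_def c_def algebra_simps)
  then show "scale * beta = shift" by simp
  have "beta + (alpha - beta) / real k - real d / real k = 0"
    unfolding defs atoms using nz
    by (simp add: field_simps; simp add: S_def P_def Q_def c_def algebra_simps)
  then show "beta + (alpha - beta) / real k = real d / real k" by simp
  have "Mconst k eps d - scale\<^sup>2 * (real d / real k * (1 - real d / real k)) = 0"
    unfolding defs atoms using nz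
    by (simp add: field_simps power2_eq_square; simp add: S_def P_def Q_def c_def algebra_simps)
  then show "Mconst k eps d = scale\<^sup>2 * (real d / real k * (1 - real d / real k))" by simp
qed

lemma choose_identities:
  shows "real d * real ((k - 1) choose d) = (real k - real d) * real ((k - 1) choose (d - 1))"
    and "(real k - 1) * (if d \<ge> 2 then real ((k - 2) choose (d - 2)) else 0)
         = (real d - 1) * real ((k - 1) choose (d - 1))"
    and "real (k choose d) = real ((k - 1) choose (d - 1)) + real ((k - 1) choose d)"
    and "real ((k - 1) choose (d - 1)) > 0"
proof -
  obtain m where m: "k = Suc m" using k by (cases k) auto
  obtain c where c: "d = Suc c" using d by (cases d) auto
  have "c < m" using d m c by simp
  have "(m - c) * (m choose c) = m * ((m - 1) choose c)" "Suc c * (m choose Suc c) = m * ((m - 1) choose c)"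
    by (rule binomial_absorb_comp binomial_absorption)+
  then have "real (Suc c) * real (m choose Suc c) = real (m - c) * real (m choose c)"
    by (metis of_nat_mult)
  then show "real d * real ((k - 1) choose d) = (real k - real d) * real ((k - 1) choose (d - 1))"
    using m c \<open>c < m\<close> by (simp flip: of_nat_mult add: of_nat_diff)
  show "(real k - 1) * (if d \<ge> 2 then real ((k - 2) choose (d - 2)) else 0)
      = (real d - 1) * real ((k - 1) choose (d - 1))"
  proof (cases c)
    case (Suc b)
    have "Suc b * (m choose Suc b) = m * ((m - 1) choose b)" by (rule binomial_absorption)
    then have "real (Suc b) * real (m choose Suc b) = real m * real ((m - 1) choose b)"
      by (metis of_nat_mult)
    then show ?thesis using m c Suc by simp
  qed (use c in simp)
  show "real (k choose d) = real ((k - 1) choose (d - 1)) + real ((k - 1) choose d)"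
    using m c by simp
  show "real ((k - 1) choose (d - 1)) > 0"
    using m c \<open>c < m\<close> by simp
qed

definition normalizer :: real where
  "normalizer = real ((k - 1) choose (d - 1)) * exp eps + real ((k - 1) choose d)"

lemma normalizer_pos: "normalizer > 0"
  using choose_identities(4) unfolding normalizer_def by (simp add: add_pos_nonneg)

lemma Qmech_eq: "Qmech k eps d y j = ((exp eps - 1) * real (y j) + 1) / normalizer"
  unfolding Qmech_def normalizer_def by (simp add: algebra_simps)

lemma normalizer_alpha: "alpha * normalizer = exp eps * real ((k - 1) choose (d - 1))"
  and normalizer_beta: "beta * normalizer
    = real ((k - 1) choose (d - 1)) + (exp eps - 1) * (if d \<ge> 2 then real ((k - 2) choose (d - 2)) else 0)"
proof -
  define c1 c0 c2 where "c1 = real ((k - 1) choose (d - 1))" and "c0 = real ((k - 1) choose d)"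
    and "c2 = (if d \<ge> 2 then real ((k - 2) choose (d - 2)) else 0)"
  define K D e where "K = real k" and "D = real d" and "e = exp eps"
  define S P Q where "S = D * e + K - D" and "P = K - D" and "Q = K - 1"
  have "c1 > 0" "D > 0" "P > 0" "Q > 0" "S > 0"
    using choose_identities(4) parameters_pos
    by (simp_all add: c1_def D_def P_def Q_def K_def S_def e_def)
  then have nz: "c1 \<noteq> 0" "D \<noteq> 0" "P \<noteq> 0" "Q \<noteq> 0" "S \<noteq> 0" by auto
  have c0: "c0 = c1 * P / D" and c2: "c2 = c1 * (D - 1) / Q"
    using choose_identities(1,2) nz
    by (simp_all add: c0_def c1_def c2_def K_def D_def P_def Q_def field_simps)
  have Z: "normalizer = c1 * S / D"
    unfolding normalizer_def c1_def[symmetric] c0_def[symmetric] c0 e_def[symmetric]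
    using nz by (simp add: field_simps S_def P_def)
  have atoms: "D * e + K - D = S" "K - 1 = Q" by (simp_all add: S_def Q_def)
  show "alpha * normalizer = exp eps * real ((k - 1) choose (d - 1))"
    unfolding Z alpha_def K_def[symmetric] D_def[symmetric] e_def[symmetric] atoms c1_def[symmetric]
    using nz by (simp add: field_simps)
  show "beta * normalizer = real ((k - 1) choose (d - 1)) + (exp eps - 1) * (if d \<ge> 2 then real ((k - 2) choose (d - 2)) else 0)"
    unfolding Z beta_def K_def[symmetric] D_def[symmetric] e_def[symmetric] atoms c1_def[symmetric]
      c2_def[symmetric] c2
    using nz by (simp add: field_simps; simp add: Q_def algebra_simps)
qed

lemma sum_Qmech_coord:
  assumes "i \<in> {1..k}" and "j \<in> {1..k}"
  shows "(\<Sum>y\<in>Yset k d. Qmech k eps d y j * real (y i)) = (if i = j then alpha else beta)"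
proof -
  have "(\<Sum>y\<in>Yset k d. Qmech k eps d y j * real (y i))
      = (\<Sum>y\<in>Yset k d. ((exp eps - 1) * (real (y j) * real (y i)) + real (y i)) / normalizer)"
    unfolding Qmech_eq by (intro sum.cong refl) (simp add: divide_inverse algebra_simps)
  also have "\<dots> = ((exp eps - 1) * (\<Sum>y\<in>Yset k d. real (y j) * real (y i))
      + (\<Sum>y\<in>Yset k d. real (y i))) / normalizer"
    by (simp add: sum.distrib sum_distrib_left flip: sum_divide_distrib)
  also have "\<dots> = (if i = j then alpha else beta)"
    using sum_Yset_coord_products[OF assms d(1)] sum_Yset_subset_ones[of "{i}" k d] assms d(1)
      normalizer_alpha normalizer_beta normalizer_pos
    by (simp add: field_simps)
  finally show ?thesis .
qed

lemma sum_Qmech: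
  assumes "j \<in> {1..k}"
  shows "(\<Sum>y\<in>Yset k d. Qmech k eps d y j) = 1"
proof -
  have "(\<Sum>y\<in>Yset k d. Qmech k eps d y j)
      = ((exp eps - 1) * (\<Sum>y\<in>Yset k d. real (y j)) + (\<Sum>y\<in>Yset k d. 1)) / normalizer"
    unfolding Qmech_eq by (simp add: sum.distrib sum_distrib_left flip: sum_divide_distrib)
  also have "\<dots> = 1"
    using sum_Yset_subset_ones[of "{j}" k d] assms d normalizer_pos choose_identities(3)
    by (simp add: card_Yset normalizer_def algebra_simps)
  finally show ?thesis .
qed

lemma sum_mdist_swap:
  "(\<Sum>y\<in>Yset k d. mdist k eps d p y * f y) = (\<Sum>j\<in>{1..k}. p j * (\<Sum>y\<in>Yset k d. Qmech k eps d y j * f y))"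
proof -
  have "(\<Sum>y\<in>Yset k d. mdist k eps d p y * f y) = (\<Sum>y\<in>Yset k d. \<Sum>j\<in>{1..k}. p j * (Qmech k eps d y j * f y))"
    unfolding mdist_def by (simp add: sum_distrib_right mult.assoc)
  also have "\<dots> = (\<Sum>j\<in>{1..k}. \<Sum>y\<in>Yset k d. p j * (Qmech k eps d y j * f y))"
    by (rule sum.swap)
  finally show ?thesis by (simp add: sum_distrib_left)
qed

lemma sum_mdist:
  assumes "p \<in> prob_simplex k"
  shows "(\<Sum>y\<in>Yset k d. mdist k eps d p y) = 1"
  using sum_mdist_swap[of p "\<lambda>_. 1"] sum_Qmech assms by (simp add: prob_simplex_def)

lemma sum_mdist_coord:
  assumes "p \<in> prob_simplex k" and "i \<in> {1..k}"
  shows "(\<Sum>y\<in>Yset k d. mdist k eps d p y * real (y i)) = beta + (alpha - beta) * p i"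
proof -
  have "(\<Sum>y\<in>Yset k d. mdist k eps d p y * real (y i)) = (\<Sum>j\<in>{1..k}. p j * (if i = j then alpha else beta))"
    unfolding sum_mdist_swap using assms(2) by (intro sum.cong refl) (simp add: sum_Qmech_coord)
  also have "\<dots> = p i * alpha + (\<Sum>j\<in>{1..k} - {i}. p j * beta)"
    using assms(2) by (simp add: sum.remove)
  also have "(\<Sum>j\<in>{1..k} - {i}. p j * beta) = (1 - p i) * beta"
    using assms by (simp add: sum_diff1 prob_simplex_def flip: sum_distrib_right)
  finally show ?thesis by (simp add: algebra_simps)
qed

lemma scale_pos: "scale > 0"
  using parameters_pos unfolding scale_def by (intro divide_pos_pos add_pos_pos mult_pos_pos) auto

lemma beta_pos: "beta > 0"
proof -
  have "(exp eps - 1) * (real d - 1) \<ge> 0" using d parameters_pos(4) by simp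
  then show ?thesis
    using parameters_pos unfolding beta_def by (intro divide_pos_pos mult_pos_pos add_pos_nonneg) auto
qed

lemma alpha_lt_1: "alpha < 1"
  using parameters_pos unfolding alpha_def by (simp add: divide_less_eq)

lemma beta_lt_alpha: "beta < alpha"
proof -
  have "scale * (alpha - beta) > 0" using scale_alpha_beta by simp
  then show ?thesis using scale_pos by (simp add: zero_less_mult_iff)
qed

lemma marginal_in_range:
  assumes "p \<in> prob_simplex k" and "i \<in> {1..k}"
  shows "beta + (alpha - beta) * p i \<in> {beta..alpha}"
proof -
  have "p i \<le> (\<Sum>j\<in>{1..k}. p j)"
    using assms by (intro member_le_sum) (auto simp: prob_simplex_def)
  then have "0 \<le> p i" "p i \<le> 1"
    using assms by (auto simp: prob_simplex_def)
  then have "0 \<le> (alpha - beta) * p i" "(alpha - beta) * p i \<le> alpha - beta"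
    using beta_lt_alpha mult_left_le[of "p i" "alpha - beta"] by simp_all
  then show ?thesis by simp
qed

lemma coordinate_loss_eq:
  assumes "p \<in> prob_simplex k" and "i \<in> {1..k}" and "n \<ge> 1"
  shows "(\<Sum>ys\<in>PiE {..<n} (\<lambda>_. Yset k d). (\<Prod>j<n. mdist k eps d p (ys j)) * \<bar>phat k eps d n ys i - p i\<bar> powr u)
       = scale powr u * real n powr (- u / 2) * binomial_abs_moment u n (beta + (alpha - beta) * p i)"
proof -
  define q where "q = beta + (alpha - beta) * p i"
  have "q \<in> {0..1}"
    using marginal_in_range[OF assms(1,2)] beta_pos alpha_lt_1 by (auto simp: q_def)
  have "scale * q - shift = p i"
    using scale_alpha_beta scale_beta by (simp add: q_def algebra_simps)
  have phat_eq: "phat k eps d n ys i = scale * (tcount n ys i / real n) - shift" for ys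
    by (simp add: phat_def scale_def shift_def)
  have "(\<Sum>ys\<in>PiE {..<n} (\<lambda>_. Yset k d). (\<Prod>j<n. mdist k eps d p (ys j)) * \<bar>phat k eps d n ys i - p i\<bar> powr u)
      = binomial_expectation n q (\<lambda>t. \<bar>scale * (real t / real n) - shift - p i\<bar> powr u)"
    unfolding phat_eq tcount_def q_def sum_mdist_coord[OF assms(1,2), symmetric]
    by (rule sum_PiE_prod_count_eq_binomial_expectation[OF finite_Yset _ sum_mdist[OF assms(1)]])
      (use Yset_values assms(2) in blast)
  also have "\<dots> = scale powr u * real n powr (- u / 2) * binomial_abs_moment u n q"
    unfolding binomial_abs_moment_eq[OF \<open>q \<in> {0..1}\<close>] binomial_expectation_cmult[symmetric]
    using powr_abs_affine_error[OF scale_pos assms(3) \<open>scale * q - shift = p i\<close>]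
    by (intro binomial_expectation_cong) simp
  finally show ?thesis unfolding q_def .
qed

lemma scaled_exp_loss_eq:
  assumes "p \<in> prob_simplex k" and "n \<ge> 1"
  shows "real n powr (u / 2) * exp_loss k eps d u n p
       = scale powr u * (\<Sum>i\<in>{1..k}. binomial_abs_moment u n (beta + (alpha - beta) * p i))"
proof -
  have "exp_loss k eps d u n p = (\<Sum>i\<in>{1..k}. \<Sum>ys\<in>PiE {..<n} (\<lambda>_. Yset k d).
        (\<Prod>j<n. mdist k eps d p (ys j)) * \<bar>phat k eps d n ys i - p i\<bar> powr u)"
    unfolding exp_loss_def lossu_def by (simp add: sum_distrib_left) (rule sum.swap)
  also have "\<dots> = real n powr (- u / 2) * scale powr u
      * (\<Sum>i\<in>{1..k}. binomial_abs_moment u n (beta + (alpha - beta) * p i))"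
    using coordinate_loss_eq[OF assms(1) _ assms(2)] by (simp add: sum_distrib_left mult_ac)
  finally show ?thesis
    using assms(2) by (simp add: mult.assoc[symmetric] flip: powr_add)
qed

lemma sum_marginals:
  assumes "p \<in> prob_simplex k"
  shows "(\<Sum>i\<in>{1..k}. beta + (alpha - beta) * p i) = real k * (real d / real k)"
proof -
  have "(\<Sum>i\<in>{1..k}. beta + (alpha - beta) * p i) = real k * beta + (alpha - beta)"
    using assms by (simp add: sum.distrib prob_simplex_def flip: sum_distrib_left)
  also have "\<dots> = real k * (real d / real k)"
    using mean_marginal k by (simp add: field_simps)
  finally show ?thesis .
qed

lemma sum_gaussian_abs_moment_marginals_le:
  assumes "0 < u" "u \<le> 2" and "p \<in> prob_simplex k"
  shows "(\<Sum>i\<in>{1..k}. gaussian_abs_moment u (beta + (alpha - beta) * p i))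
       \<le> real k * gaussian_abs_moment u (real d / real k)"
proof -
  have "(\<Sum>i\<in>{1..k}. gaussian_abs_moment u (beta + (alpha - beta) * p i))
      \<le> real (card {1..k}) * gaussian_abs_moment u (real d / real k)"
  proof (rule sum_gaussian_abs_moment_le[OF assms(1,2)])
    show "0 < real d / real k" "real d / real k < 1"
      using k d by auto
    show "beta + (alpha - beta) * p i \<in> {0..1}" if "i \<in> {1..k}" for i
      using marginal_in_range[OF assms(3) that] beta_pos alpha_lt_1 by auto
    show "(\<Sum>i\<in>{1..k}. beta + (alpha - beta) * p i) = real (card {1..k}) * (real d / real k)"
      using sum_marginals[OF assms(3)] by simp
  qed simp
  then show ?thesis by simp
qed

lemma eventually_scaled_exp_loss_le:
  assumes u: "0 < u" "u \<le> 2" and "\<delta> > 0"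
  shows "eventually (\<lambda>n. \<forall>p\<in>prob_simplex k. real n powr (u / 2) * exp_loss k eps d u n p
           \<le> scale powr u * real k * (gaussian_abs_moment u (real d / real k) + \<delta>)) sequentially"
proof -
  have "{beta..alpha} \<subseteq> {0..1}"
    using beta_pos alpha_lt_1 by auto
  show ?thesis
    using eventually_binomial_abs_moment_le[OF u \<open>{beta..alpha} \<subseteq> {0..1}\<close> \<open>\<delta> > 0\<close>]
      eventually_ge_at_top[of 1]
  proof eventually_elim
    case (elim n)
    show ?case
    proof
      fix p assume p: "p \<in> prob_simplex k"
      have "(\<Sum>i\<in>{1..k}. binomial_abs_moment u n (beta + (alpha - beta) * p i))
          \<le> (\<Sum>i\<in>{1..k}. gaussian_abs_moment u (beta + (alpha - beta) * p i) + \<delta>)"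
        using elim(1) marginal_in_range[OF p] by (intro sum_mono) auto
      also have "\<dots> \<le> real k * (gaussian_abs_moment u (real d / real k) + \<delta>)"
        using sum_gaussian_abs_moment_marginals_le[OF u p] by (simp add: sum.distrib algebra_simps)
      finally show "real n powr (u / 2) * exp_loss k eps d u n p
          \<le> scale powr u * real k * (gaussian_abs_moment u (real d / real k) + \<delta>)"
        unfolding scaled_exp_loss_eq[OF p elim(2)] mult.assoc
        using scale_pos by (intro mult_left_mono) auto
    qed
  qed
qed

lemma uniform_in_prob_simplex: "(\<lambda>_. 1 / real k) \<in> prob_simplex k"
  using k by (simp add: prob_simplex_def)

lemma scaled_exp_loss_uniform:
  "n \<ge> 1 \<Longrightarrow> real n powr (u / 2) * exp_loss k eps d u n (\<lambda>_. 1 / real k)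
     = scale powr u * real k * binomial_abs_moment u n (real d / real k)"
  using scaled_exp_loss_eq[OF uniform_in_prob_simplex] mean_marginal by simp

lemma eventually_scaled_risk_le:
  assumes u: "0 < u" "u \<le> 2" and "\<delta> > 0"
  shows "eventually (\<lambda>n. bdd_above (exp_loss k eps d u n ` prob_simplex k) \<and>
      real n powr (u / 2) * risk k eps d u n \<le> scale powr u * real k * gaussian_abs_moment u (real d / real k) + \<delta>)
    sequentially"
proof -
  define c where "c = scale powr u * real k"
  have "c > 0" using scale_pos k by (simp add: c_def)
  show ?thesis
    using eventually_scaled_exp_loss_le[OF u divide_pos_pos[OF \<open>\<delta> > 0\<close> \<open>c > 0\<close>]] eventually_ge_at_top[of 1]
  proof eventually_elim
    case (elim n)
    define B where "B = (c * gaussian_abs_moment u (real d / real k) + \<delta>) / real n powr (u / 2)"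
    have c_split: "c * (gaussian_abs_moment u (real d / real k) + \<delta> / c)
        = c * gaussian_abs_moment u (real d / real k) + \<delta>"
      using \<open>c > 0\<close> by (simp add: field_simps)
    have bound: "exp_loss k eps d u n p \<le> B" if "p \<in> prob_simplex k" for p
    proof -
      have "real n powr (u / 2) * exp_loss k eps d u n p \<le> c * gaussian_abs_moment u (real d / real k) + \<delta>"
        using bspec[OF elim(1) that] unfolding c_def[symmetric] c_split .
      then show ?thesis
        using elim(2) by (simp add: B_def pos_le_divide_eq mult.commute)
    qed
    have "bdd_above (exp_loss k eps d u n ` prob_simplex k)"
      by (rule bdd_aboveI2) (rule bound)
    moreover have "risk k eps d u n \<le> B"
      unfolding risk_def using bound uniform_in_prob_simplex by (intro cSUP_least) auto
    ultimately show ?case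
      using elim(2) by (simp add: B_def c_def field_simps)
  qed
qed

lemma limit_constant:
  "scale powr u * real k * gaussian_abs_moment u (real d / real k) = real k * Cu u * Mconst k eps d powr (u / 2)"
proof -
  have "0 \<le> real d / real k * (1 - real d / real k)"
    using k d by simp
  then have "Mconst k eps d powr (u / 2) = (scale\<^sup>2) powr (u / 2) * (real d / real k * (1 - real d / real k)) powr (u / 2)"
    unfolding Mconst_eq by (intro powr_mult)
  also have "(scale\<^sup>2) powr (u / 2) = scale powr u"
    using scale_pos by (simp add: powr_powr flip: powr_numeral)
  finally show ?thesis
    unfolding gaussian_abs_moment_def by (simp add: mult_ac)
qed

lemma scaled_risk_tendsto:
  assumes u: "0 < u" "u \<le> 2"
  shows "(\<lambda>n. real n powr (u / 2) * risk k eps d u n) \<longlonglongrightarrow> real k * Cu u * Mconst k eps d powr (u / 2)"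
  unfolding limit_constant[symmetric]
proof (rule tendsto_of_lower_bound_and_eventually_le)
  show "(\<lambda>n. scale powr u * real k * binomial_abs_moment u n (real d / real k))
      \<longlonglongrightarrow> scale powr u * real k * gaussian_abs_moment u (real d / real k)"
    using k d by (intro tendsto_mult tendsto_const binomial_abs_moment_tendsto[OF u filterlim_ident]) auto
  show "eventually (\<lambda>n. real n powr (u / 2) * risk k eps d u n
      \<le> scale powr u * real k * gaussian_abs_moment u (real d / real k) + \<delta>) sequentially"
    if "\<delta> > 0" for \<delta>
    using eventually_scaled_risk_le[OF u that] by (rule eventually_mono) simp
  show "eventually (\<lambda>n. scale powr u * real k * binomial_abs_moment u n (real d / real k)
      \<le> real n powr (u / 2) * risk k eps d u n) sequentially"
    using eventually_scaled_risk_le[OF u zero_less_one] eventually_ge_at_top[of 1]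
  proof eventually_elim
    case (elim n)
    then have "exp_loss k eps d u n (\<lambda>_. 1 / real k) \<le> risk k eps d u n"
      unfolding risk_def using uniform_in_prob_simplex by (intro cSUP_upper) auto
    then show ?case
      unfolding scaled_exp_loss_uniform[OF elim(2), symmetric] by (rule mult_left_mono) simp
  qed
qed

end

theorem theorem3:
  fixes k ds :: nat and eps u :: real
  assumes "k \<ge> 2" and "eps > 0" and "0 < u" and "u \<le> 2"
    and "ds \<in> {1..k-1}" and "\<forall>d\<in>{1..k-1}. dobj k eps ds \<le> dobj k eps d"
  shows "(\<lambda>n. risk k eps ds u n
            - real k / real n powr (u / 2) * Cu u * Mconst k eps ds powr (u / 2))
         \<in> o(\<lambda>n. real n powr (- u / 2))"
proof -
  interpret subset_mechanism k ds eps
    using assms(1,2,5) by unfold_locales auto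
  have "(\<lambda>n. risk k eps ds u n - real k * Cu u * Mconst k eps ds powr (u / 2) / real n powr (u / 2))
      \<in> o(\<lambda>n. real n powr (- (u / 2)))"
    using scaled_risk_tendsto[OF assms(3,4)] by (rule smallo_of_scaled_tendsto)
  then show ?thesis
    by (simp add: mult_ac)
qed

end
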